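(* For every $\mathsf{K}\in\mathbb{K}$, the gradient of $J$ is $$\nabla_{C_{\mathsf{K}}}J(\mathsf{K})=2B^{\mathsf T}(P_{11}A+P_{12}B_{\mathsf{K}}C)\Sigma_{12}+2\big((R+B^{\mathsf T}P_{11}B)C_{\mathsf{K}}+B^{\mathsf T}P_{12}A_{\mathsf{K}}\big)\Sigma_{22},$$ $$\nabla_{B_{\mathsf{K}}}J(\mathsf{K})=2(P_{12}^{\mathsf T}A+P_{22}B_{\mathsf{K}}C)\Sigma_{11}C^{\mathsf T}+2(P_{12}^{\mathsf T}BC_{\mathsf{K}}+P_{22}A_{\mathsf{K}})\Sigma_{12}^{\mathsf T}C^{\mathsf T},$$ $$\nabla_{A_{\mathsf{K}}}J(\mathsf{K})=2(P_{12}^{\mathsf T}BC_{\mathsf{K}}+P_{22}A_{\mathsf{K}})\Sigma_{22}+2(P_{12}^{\mathsf T}A+P_{22}B_{\mathsf{K}}C)\Sigma_{12},$$ where $P_{\mathsf{K}}=\begin{bmatrix}P_{11}&P_{12}\\P_{12}^{\mathsf T}&P_{22}\end{bmatrix}$ and $\Sigma_{\mathsf{K}}=\begin{bmatrix}\Sigma_{11}&\Sigma_{12}\\\Sigma_{12}^{\mathsf T}&\Sigma_{22}\end{bmatrix}$ (blocks $n\times n$).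
   Context: Consider the discrete-time LTI system $x_{t+1}=Ax_t+Bu_t$, $y_t=Cx_t$ with $A\in\mathbb{R}^{n\times n}$, $B\in\mathbb{R}^{n\times m}$, $C\in\mathbb{R}^{d\times n}$, weights $Q\in\mathbb{S}^n_+$, $R\in\mathbb{S}^m_{++}$. A dynamic controller is $\xi_{t+1}=A_{\mathsf{K}}\xi_t+B_{\mathsf{K}}y_t$, $u_t=C_{\mathsf{K}}\xi_t$ with $\xi_t\in\mathbb{R}^n$, parametrized by $\mathsf{K}=\begin{bmatrix}0_{m\times d} & C_{\mathsf{K}}\\ B_{\mathsf{K}} & A_{\mathsf{K}}\end{bmatrix}$. Set $\bar A=\begin{bmatrix}A&0\\0&0\end{bmatrix}$, $\bar B=\begin{bmatrix}B&0\\0&I_n\end{bmatrix}$, $\bar C=\begin{bmatrix}C&0\\0&I_n\end{bmatrix}$, $\bar Q=\begin{bmatrix}Q&0\\0&0\end{bmatrix}$, $F=[0,I_n]$; closed loop $\bar x_{t+1}=(\bar A+\bar B\mathsf{K}\bar C)\bar x_t$, $\bar x_t=(x_t,\xi_t)$. $\mathbb{K}=\{\mathsf{K}:\rho(\bar A+\bar B\mathsf{K}\bar C)<1\}$. The initial $\bar x_0$ is drawn from a fixed distribution $\bar{\mathcal D}$ with $X=\mathbb{E}\,\bar x_0\bar x_0^{\mathsf T}$. The cost is $J(\mathsf{K})=\mathbb{E}\sum_{t=0}^\infty(x_t^{\mathsf T}Qx_t+u_t^{\mathsf T}Ru_t)$, viewed as a function of $(A_{\mathsf{K}},B_{\mathsf{K}},C_{\mathsf{K}})$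 on $\mathbb{K}$. $P_{\mathsf{K}}$ is the unique positive semidefinite solution of $P_{\mathsf{K}}=\bar Q+F^{\mathsf T}C_{\mathsf{K}}^{\mathsf T}RC_{\mathsf{K}}F+(\bar A+\bar B\mathsf{K}\bar C)^{\mathsf T}P_{\mathsf{K}}(\bar A+\bar B\mathsf{K}\bar C)$, and $\Sigma_{\mathsf{K}}=\mathbb{E}\sum_{t=0}^\infty\bar x_t\bar x_t^{\mathsf T}$, the unique positive semidefinite solution of $\Sigma_{\mathsf{K}}=X+(\bar A+\bar B\mathsf{K}\bar C)\Sigma_{\mathsf{K}}(\bar A+\bar B\mathsf{K}\bar C)^{\mathsf T}$. *)

theory Defs
  imports "HOL-Analysis.Analysis" "HOL-Probability.Probability"
begin

text \<open>Matrices are HOL-Analysis matrices: a p x q real matrix has type real^'q^'p.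
  The augmented state (x, xi) lives in real^('n + 'n): index Inl i is x_i, Inr i is xi_i.\<close>

definition psd_mat :: "real^'n::finite^'n \<Rightarrow> bool" where
  "psd_mat M \<longleftrightarrow> transpose M = M \<and> (\<forall>x. 0 \<le> x \<bullet> (M *v x))"

definition pd_mat :: "real^'n::finite^'n \<Rightarrow> bool" where
  "pd_mat M \<longleftrightarrow> transpose M = M \<and> (\<forall>x. x \<noteq> 0 \<longrightarrow> 0 < x \<bullet> (M *v x))"

definition cplx_mat :: "real^'n::finite^'m::finite \<Rightarrow> complex^'n^'m" where
  "cplx_mat M = (\<chi> i j. complex_of_real (M $ i $ j))"

definition eigenvalues :: "real^'n::finite^'n \<Rightarrow> complex set" where
  "eigenvalues M = {l. \<exists>v::complex^'n. v \<noteq> 0 \<and> cplx_mat M *v v = l *s v}"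

definition spectral_radius :: "real^'n::finite^'n \<Rightarrow> real" where
  "spectral_radius M = Max (cmod ` eigenvalues M)"

definition blk :: "real^'c1^'r1 \<Rightarrow> real^'c2^'r1 \<Rightarrow> real^'c1^'r2 \<Rightarrow> real^'c2^'r2
    \<Rightarrow> real^('c1 + 'c2)^('r1 + 'r2)" where
  "blk M11 M12 M21 M22 = (\<chi> i j. case i of
      Inl a \<Rightarrow> (case j of Inl b \<Rightarrow> M11 $ a $ b | Inr b \<Rightarrow> M12 $ a $ b)
    | Inr a \<Rightarrow> (case j of Inl b \<Rightarrow> M21 $ a $ b | Inr b \<Rightarrow> M22 $ a $ b))"

definition blk11 :: "real^('c1::finite + 'c2::finite)^('r1::finite + 'r2::finite) \<Rightarrow> real^'c1^'r1" where
  "blk11 M = (\<chi> i j. M $ Inl i $ Inl j)"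
definition blk12 :: "real^('c1::finite + 'c2::finite)^('r1::finite + 'r2::finite) \<Rightarrow> real^'c2^'r1" where
  "blk12 M = (\<chi> i j. M $ Inl i $ Inr j)"
definition blk22 :: "real^('c1::finite + 'c2::finite)^('r1::finite + 'r2::finite) \<Rightarrow> real^'c2^'r2" where
  "blk22 M = (\<chi> i j. M $ Inr i $ Inr j)"

definition Abar :: "real^'n::finite^'n \<Rightarrow> real^('n + 'n)^('n + 'n)" where
  "Abar A = blk A 0 0 0"
definition Bbar :: "real^'m::finite^'n::finite \<Rightarrow> real^('m + 'n)^('n + 'n)" where
  "Bbar B = blk B 0 0 (mat 1)"
definition Cbar :: "real^'n::finite^'d::finite \<Rightarrow> real^('n + 'n)^('d + 'n)" where
  "Cbar C = blk C 0 0 (mat 1)"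
definition Qbar :: "real^'n::finite^'n \<Rightarrow> real^('n + 'n)^('n + 'n)" where
  "Qbar Q = blk Q 0 0 0"
definition Fsel :: "real^('n::finite + 'n)^'n" where
  "Fsel = (\<chi> i j. case j of Inl _ \<Rightarrow> 0 | Inr b \<Rightarrow> (if b = i then 1 else 0))"
definition Kmat :: "real^'n::finite^'n \<Rightarrow> real^'d::finite^'n \<Rightarrow> real^'n^'m::finite \<Rightarrow> real^('d + 'n)^('m + 'n)" where
  "Kmat AK BK CK = blk 0 CK BK AK"

definition Acl :: "real^'n::finite^'n \<Rightarrow> real^'m::finite^'n \<Rightarrow> real^'n^'d::finite
    \<Rightarrow> real^'n^'n \<Rightarrow> real^'d^'n \<Rightarrow> real^'n^'m \<Rightarrow> real^('n + 'n)^('n + 'n)" where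
  "Acl A B C AK BK CK = Abar A + Bbar B ** Kmat AK BK CK ** Cbar C"

definition stab_set :: "real^'n::finite^'n \<Rightarrow> real^'m::finite^'n \<Rightarrow> real^'n^'d::finite
    \<Rightarrow> ((real^'n^'n) \<times> (real^'d^'n) \<times> (real^'n^'m)) set" where
  "stab_set A B C = {(AK, BK, CK). spectral_radius (Acl A B C AK BK CK) < 1}"

definition traj :: "real^('n::finite + 'n)^('n + 'n) \<Rightarrow> real^('n + 'n) \<Rightarrow> nat \<Rightarrow> real^('n + 'n)" where
  "traj M z t = (((*v) M) ^^ t) z"

definition xpart :: "real^('n::finite + 'n) \<Rightarrow> real^'n" where
  "xpart z = (\<chi> i. z $ Inl i)"
definition xipart :: "real^('n::finite + 'n) \<Rightarrow> real^'n" where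
  "xipart z = (\<chi> i. z $ Inr i)"

definition Jcost :: "(real^('n::finite + 'n)) measure \<Rightarrow> real^'n^'n \<Rightarrow> real^'m::finite^'n \<Rightarrow> real^'n^'d::finite
    \<Rightarrow> real^'n^'n \<Rightarrow> real^'m^'m \<Rightarrow> (real^'n^'n) \<times> (real^'d^'n) \<times> (real^'n^'m) \<Rightarrow> real" where
  "Jcost D A B C Q R = (\<lambda>(AK, BK, CK).
     integral\<^sup>L D (\<lambda>z. \<Sum>t. (let xb = traj (Acl A B C AK BK CK) z t;
                              x = xpart xb; u = CK *v xipart xb
                          in x \<bullet> (Q *v x) + u \<bullet> (R *v u))))"

definition Xmom :: "(real^('n::finite + 'n)) measure \<Rightarrow> real^('n + 'n)^('n + 'n)" where
  "Xmom D = (\<chi> i j. integral\<^sup>L D (\<lambda>z. z $ i * z $ j))"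

definition PK :: "real^'n::finite^'n \<Rightarrow> real^'m::finite^'n \<Rightarrow> real^'n^'d::finite \<Rightarrow> real^'n^'n \<Rightarrow> real^'m^'m
    \<Rightarrow> real^'n^'n \<Rightarrow> real^'d^'n \<Rightarrow> real^'n^'m \<Rightarrow> real^('n + 'n)^('n + 'n)" where
  "PK A B C Q R AK BK CK = (THE P. psd_mat P \<and>
     P = Qbar Q + transpose Fsel ** transpose CK ** R ** CK ** Fsel
         + transpose (Acl A B C AK BK CK) ** P ** Acl A B C AK BK CK)"

definition SigmaK :: "real^('n::finite + 'n)^('n + 'n) \<Rightarrow> real^'n^'n \<Rightarrow> real^'m::finite^'n \<Rightarrow> real^'n^'d::finite
    \<Rightarrow> real^'n^'n \<Rightarrow> real^'d^'n \<Rightarrow> real^'n^'m \<Rightarrow> real^('n + 'n)^('n + 'n)" where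
  "SigmaK X A B C AK BK CK = (THE S. psd_mat S \<and>
     S = X + Acl A B C AK BK CK ** S ** transpose (Acl A B C AK BK CK))"

end

(*
  If \<rho>(A_cl) < 1, the powers of the closed-loop matrix decay geometrically, so P_K and \<Sigma>_K are the
  convergent Lyapunov series \<Sum> (A_cl^t)' W A_cl^t and \<Sum> A_cl^t X (A_cl^t)', and J(K) = <P_K, X>.
  Perturbing K by dK, the Lyapunov equation for P_K telescopes the cost difference into
  J(K + dK) - J(K) = <E(dK), \<Sigma>_{K+dK}>, where E(dK) is the residual of P_K in the Lyapunov
  equation of K + dK; E is the sum of a linear term E1(dK) and a quadratic one. Since \<Sigma> depends
  Lipschitz-continuously on the closed-loop matrix near A_cl, the derivative of J is
  dK \<mapsto> <E1(dK), \<Sigma>_K>, and writing out the blocks of E1 gives the three gradient formulas.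
*)
theory Submission
  imports Defs Jordan_Normal_Form.Spectral_Radius
begin

(* Jordan_Normal_Form uses these symbols for its own vectors. *)
no_notation vec_index (infixl "$" 100)
no_notation scalar_prod (infix "\<bullet>" 70)

section \<open>Matrix algebra\<close>

lemma matrix_add_rdistrib: "(B + C) ** A = B ** A + C ** (A :: 'a::semiring_1^'m::finite^'n::finite)"
  by (vector matrix_matrix_mult_def sum.distrib[symmetric] field_simps)

lemma matrix_diff_ldistrib: "A ** (B - C) = A ** B - A ** (C :: 'a::ring_1^'m::finite^'n::finite)"
  by (vector matrix_matrix_mult_def sum_subtractf[symmetric] field_simps)

lemma matrix_diff_rdistrib: "(B - C) ** A = B ** A - C ** (A :: 'a::ring_1^'m::finite^'n::finite)"
  by (vector matrix_matrix_mult_def sum_subtractf[symmetric] field_simps)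

lemmas matrix_distribs = matrix_add_ldistrib matrix_add_rdistrib matrix_diff_ldistrib matrix_diff_rdistrib

lemma matrix_mul_sum_left: "finite S \<Longrightarrow> A ** sum f S = (\<Sum>x\<in>S. A ** f x)"
  by (induction S rule: finite_induct) (simp_all add: matrix_add_ldistrib)

lemma transpose_add: "transpose (A + B) = transpose A + transpose (B :: 'a::semiring_1^'m::finite^'n::finite)"
  by (simp add: transpose_def Finite_Cartesian_Product.vec_eq_iff)

lemma transpose_diff: "transpose (A - B) = transpose A - transpose (B :: 'a::ring_1^'m::finite^'n::finite)"
  by (simp add: transpose_def Finite_Cartesian_Product.vec_eq_iff)

lemma transpose_zero: "transpose (0 :: 'a::zero^'m::finite^'n::finite) = 0"
  by (simp add: transpose_def Finite_Cartesian_Product.vec_eq_iff)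

lemma symmetric_entry: "transpose M = M \<Longrightarrow> M $ a $ b = M $ b $ a"
  by (metis transpose_def vec_lambda_beta)

lemma inner_matrix_eq_trace: "(A :: real^'n::finite^'m::finite) \<bullet> B = trace (transpose A ** B)"
  unfolding inner_vec_def trace_def matrix_matrix_mult_def transpose_def
  by (simp add: inner_real_def, rule sum.swap)

lemma inner_matrix_mult_left: "(X ** Y) \<bullet> Z = Y \<bullet> (transpose X ** (Z :: real^'a::finite^'b::finite))"
  by (simp add: inner_matrix_eq_trace matrix_transpose_mul matrix_mul_assoc)

lemma inner_matrix_mult_right: "(Y ** W) \<bullet> Z = Y \<bullet> (Z ** transpose (W :: real^'a::finite^'c::finite))"
proof -
  have "(Y ** W) \<bullet> Z = trace (transpose W ** (transpose Y ** Z))"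
    by (simp add: inner_matrix_eq_trace matrix_transpose_mul matrix_mul_assoc)
  also have "\<dots> = trace ((transpose Y ** Z) ** transpose W)" by (rule trace_mul_sym)
  also have "\<dots> = Y \<bullet> (Z ** transpose W)" by (simp add: inner_matrix_eq_trace matrix_mul_assoc)
  finally show ?thesis .
qed

lemma inner_matrix_sandwich:
  "(transpose A ** E ** A) \<bullet> X = E \<bullet> (A ** X ** transpose (A :: real^'k::finite^'k))"
  using inner_matrix_mult_right[of "transpose A ** E" A X]
    inner_matrix_mult_left[of "transpose A" E "X ** transpose A"]
  by (simp add: matrix_mul_assoc)

lemma inner_transpose_symmetric: "transpose S = S \<Longrightarrow> transpose X \<bullet> S = X \<bullet> (S :: real^'a::finite^'a)"
  by (metis inner_commute inner_matrix_eq_trace trace_mul_sym transpose_transpose)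

lemma quadratic_form_sandwich:
  "z \<bullet> ((transpose A ** W ** A) *v z) = (A *v z) \<bullet> (W *v (A *v (z :: real^'n::finite)))"
proof -
  have "(transpose A ** W ** A) *v z = transpose A *v (W *v (A *v z))"
    by (simp add: matrix_vector_mul_assoc matrix_mul_assoc)
  then show ?thesis by (metis dot_lmul_matrix inner_commute transpose_matrix_vector)
qed

lemma quadratic_form_eq_sum: "z \<bullet> (Y *v z) = (\<Sum>i\<in>UNIV. \<Sum>j\<in>UNIV. Y $ i $ j * (z $ i * (z :: real^'k::finite) $ j))"
  unfolding inner_vec_def matrix_vector_mult_def by (simp add: sum_distrib_left mult_ac)

lemma bounded_linear_matrix_sandwich:
  "bounded_linear (\<lambda>Y :: real^'m::finite^'n::finite. A ** Y ** (B :: real^'p::finite^'m))"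
  by (intro linear_conv_bounded_linear[THEN iffD1] linearI)
     (simp_all add: matrix_add_ldistrib matrix_add_rdistrib matrix_scalar_ac scalar_matrix_assoc)

lemma bounded_linear_transpose:
  "bounded_linear (transpose :: real^'a::finite^'b::finite \<Rightarrow> real^'b^'a)"
  by (intro linear_conv_bounded_linear[THEN iffD1] linearI)
     (simp_all add: transpose_def Finite_Cartesian_Product.vec_eq_iff)

lemma bounded_linear_quadratic_form:
  "bounded_linear (\<lambda>A :: real^'k::finite^'k. z \<bullet> (A *v z))"
  by (intro linear_conv_bounded_linear[THEN iffD1] linearI)
     (simp_all add: matrix_vector_mult_add_rdistrib inner_add_right scaleR_matrix_vector_assoc[symmetric])

fun matpow :: "'a::comm_ring_1^'k::finite^'k \<Rightarrow> nat \<Rightarrow> 'a^'k^'k" where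
  "matpow M 0 = Finite_Cartesian_Product.mat 1"
| "matpow M (Suc t) = M ** matpow M t"

lemma matpow_Suc_right: "matpow M (Suc t) = matpow M t ** M"
  by (induction t) (simp_all add: matrix_mul_assoc)

lemma matpow_transpose: "matpow (transpose M) t = transpose (matpow M t)"
proof (induction t)
  case (Suc t)
  have "transpose (matpow M (Suc t)) = transpose M ** transpose (matpow M t)"
    by (simp only: matpow_Suc_right matrix_transpose_mul)
  then show ?case using Suc by simp
qed simp

lemma matpow_scaleR: "matpow (a *\<^sub>R (M :: real^'k::finite^'k)) t = a ^ t *\<^sub>R matpow M t"
  by (induction t) (simp_all add: scalar_matrix_assoc[symmetric] matrix_scalar_ac)

lemma matpow_perturbation:
  "matpow M t = matpow M0 t + (\<Sum>s<t. matpow M0 (t - 1 - s) ** (M - M0) ** matpow M s)"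
proof (induction t)
  case (Suc t)
  have shift: "(\<Sum>s<t. M0 ** (matpow M0 (t - Suc s) ** (M - M0) ** matpow M s))
      = (\<Sum>s<t. matpow M0 (t - s) ** (M - M0) ** matpow M s)"
  proof (rule sum.cong[OF refl])
    fix s assume "s \<in> {..<t}"
    then have "t - s = Suc (t - Suc s)" by simp
    then show "M0 ** (matpow M0 (t - Suc s) ** (M - M0) ** matpow M s)
      = matpow M0 (t - s) ** (M - M0) ** matpow M s" by (simp add: matrix_mul_assoc)
  qed
  have "matpow M (Suc t) = M0 ** matpow M t + (M - M0) ** matpow M t"
    by (simp add: matrix_add_rdistrib[symmetric])
  also have "\<dots> = M0 ** matpow M0 t
      + (\<Sum>s<t. M0 ** (matpow M0 (t - 1 - s) ** (M - M0) ** matpow M s)) + (M - M0) ** matpow M t"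
    by (subst Suc) (simp add: matrix_add_ldistrib matrix_mul_sum_left)
  also have "\<dots> = matpow M0 (Suc t) + (\<Sum>s<Suc t. matpow M0 (Suc t - 1 - s) ** (M - M0) ** matpow M s)"
    by (simp add: shift)
  finally show ?case .
qed simp

section \<open>Eigenvalues via Jordan normal forms\<close>

(*
  Jordan_Normal_Form bounds the powers of a complex matrix of spectral radius below 1; to use it,
  HOL-Analysis matrices are transferred along an arbitrary enumeration of the index type.
*)
definition cart_index :: "nat \<Rightarrow> 'k::finite" where
  "cart_index = (SOME h. bij_betw h {..<CARD('k)} UNIV)"

definition cart_pos :: "'k::finite \<Rightarrow> nat" where
  "cart_pos = inv_into {..<CARD('k)} cart_index"

lemma bij_cart_index: "bij_betw (cart_index :: nat \<Rightarrow> 'k::finite) {..<CARD('k)} UNIV"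
proof -
  have "\<exists>h :: nat \<Rightarrow> 'k. bij_betw h {..<CARD('k)} UNIV"
    using ex_bij_betw_nat_finite[of "UNIV :: 'k set"] by (simp add: atLeast0LessThan)
  then show ?thesis unfolding cart_index_def by (rule someI_ex)
qed

lemma cart_pos_less: "cart_pos (k :: 'k::finite) < CARD('k)"
  unfolding cart_pos_def using bij_cart_index[where 'k='k]
  by (metis UNIV_I bij_betw_def inv_into_into lessThan_iff)

lemma cart_index_pos [simp]: "cart_index (cart_pos (k :: 'k::finite)) = k"
  unfolding cart_pos_def using bij_cart_index[where 'k='k] by (simp add: bij_betw_def f_inv_into_f)

lemma cart_pos_index [simp]: "i < CARD('k) \<Longrightarrow> cart_pos (cart_index i :: 'k::finite) = i"
  unfolding cart_pos_def using bij_cart_index[where 'k='k] by (simp add: bij_betw_def inv_into_f_f)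

lemma sum_cart_index: "(\<Sum>i\<in>{0..<CARD('k)}. f (cart_index i :: 'k::finite)) = (\<Sum>k\<in>UNIV. f k)"
  using sum.reindex_bij_betw[OF bij_cart_index, of f] by (simp add: atLeast0LessThan)

definition mat_of_cart :: "'a^'k::finite^'k \<Rightarrow> 'a mat" where
  "mat_of_cart M = Matrix.mat CARD('k) CARD('k) (\<lambda>(i, j). M $ cart_index i $ cart_index j)"

definition vec_of_cart :: "'a^'k::finite \<Rightarrow> 'a Matrix.vec" where
  "vec_of_cart v = Matrix.vec CARD('k) (\<lambda>i. v $ cart_index i)"

lemma mat_of_cart_carrier: "mat_of_cart (M :: 'a^'k::finite^'k) \<in> carrier_mat CARD('k) CARD('k)"
  unfolding mat_of_cart_def by simp

lemma mat_of_cart_entry: "mat_of_cart M $$ (cart_pos i, cart_pos j) = M $ i $ j"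
  unfolding mat_of_cart_def by (simp add: cart_pos_less)

lemma dim_mat_of_cart [simp]:
  "dim_row (mat_of_cart (M :: 'a^'k::finite^'k)) = CARD('k)"
  "dim_col (mat_of_cart (M :: 'a^'k::finite^'k)) = CARD('k)"
  unfolding mat_of_cart_def by simp_all

lemma vec_of_cart_index: "vec_index (vec_of_cart v) (cart_pos k) = v $ k"
  unfolding vec_of_cart_def by (simp add: cart_pos_less)

lemma mat_of_cart_mult:
  "mat_of_cart (A ** B) = mat_of_cart A * mat_of_cart (B :: 'a::comm_ring_1^'k::finite^'k)"
proof (rule eq_matI)
  fix i j assume "i < dim_row (mat_of_cart A * mat_of_cart B)" "j < dim_col (mat_of_cart A * mat_of_cart B)"
  then show "mat_of_cart (A ** B) $$ (i, j) = (mat_of_cart A * mat_of_cart B) $$ (i, j)"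
    by (simp add: mat_of_cart_def matrix_matrix_mult_def scalar_prod_def
        sum_cart_index[of "\<lambda>k. A $ cart_index i $ k * B $ k $ cart_index j"])
qed simp_all

lemma mat_of_cart_one:
  "mat_of_cart (Finite_Cartesian_Product.mat 1 :: 'a::comm_ring_1^'k::finite^'k) = 1\<^sub>m CARD('k)"
proof (rule eq_matI)
  fix i j assume "i < dim_row (1\<^sub>m CARD('k))" "j < dim_col (1\<^sub>m CARD('k))"
  then have "i < CARD('k)" "j < CARD('k)" by simp_all
  moreover have "cart_index i = (cart_index j :: 'k) \<longleftrightarrow> i = j"
    using calculation bij_cart_index unfolding bij_betw_def inj_on_def by auto
  ultimately show "mat_of_cart (Finite_Cartesian_Product.mat 1 :: 'a^'k^'k) $$ (i, j) = 1\<^sub>m CARD('k) $$ (i, j)"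
    by (simp add: mat_of_cart_def Finite_Cartesian_Product.mat_def)
qed (simp_all add: mat_of_cart_def)

lemma mat_of_cart_matpow: "mat_of_cart (matpow M t) = mat_of_cart M ^\<^sub>m t"
  by (induction t) (simp_all add: mat_of_cart_one mat_of_cart_mult matpow_Suc_right del: matpow.simps(2))

lemma mat_of_cart_mult_vec:
  "mat_of_cart M *\<^sub>v vec_of_cart v = vec_of_cart (M *v (v :: 'a::comm_ring_1^'k::finite))"
proof (rule eq_vecI)
  fix i assume "i < dim_vec (vec_of_cart (M *v v))"
  then show "vec_index (mat_of_cart M *\<^sub>v vec_of_cart v) i = vec_index (vec_of_cart (M *v v)) i"
    by (simp add: mat_of_cart_def vec_of_cart_def matrix_vector_mult_def scalar_prod_def
        sum_cart_index[of "\<lambda>k. M $ cart_index i $ k * v $ k"])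
qed (simp add: vec_of_cart_def)

lemma vec_of_cart_smult: "vec_of_cart (a *s v) = a \<cdot>\<^sub>v vec_of_cart (v :: 'a::comm_ring_1^'k::finite)"
  by (rule eq_vecI) (simp_all add: vec_of_cart_def)

lemma vec_of_cart_carrier: "vec_of_cart (v :: 'a^'k::finite) \<in> carrier_vec CARD('k)"
  unfolding vec_of_cart_def by simp

lemma vec_of_cart_inject: "vec_of_cart v = vec_of_cart w \<longleftrightarrow> v = (w :: 'a^'k::finite)"
proof
  assume "vec_of_cart v = vec_of_cart w"
  then have "v $ k = w $ k" for k by (metis vec_of_cart_index)
  then show "v = w" by (simp add: Finite_Cartesian_Product.vec_eq_iff)
qed simp

lemma vec_of_cart_zero: "vec_of_cart (0 :: 'a::zero^'k::finite) = 0\<^sub>v CARD('k)"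
  by (rule eq_vecI) (simp_all add: vec_of_cart_def)

lemma carrier_vec_eq_vec_of_cart:
  assumes "u \<in> carrier_vec CARD('k::finite)"
  shows "u = vec_of_cart (\<chi> k::'k. vec_index u (cart_pos k))"
  using assms by (intro eq_vecI) (simp_all add: vec_of_cart_def)

lemma eigenvalue_mat_of_cart_iff:
  fixes M :: "real^'k::finite^'k"
  shows "eigenvalue (mat_of_cart (cplx_mat M)) l \<longleftrightarrow> l \<in> eigenvalues M"
proof
  assume "eigenvalue (mat_of_cart (cplx_mat M)) l"
  then obtain u where u: "u \<in> carrier_vec CARD('k)" "u \<noteq> 0\<^sub>v CARD('k)"
    "mat_of_cart (cplx_mat M) *\<^sub>v u = l \<cdot>\<^sub>v u"
    unfolding eigenvalue_def eigenvector_def by (auto simp: mat_of_cart_def)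
  define v where "v = (\<chi> k::'k. vec_index u (cart_pos k))"
  have u_eq: "u = vec_of_cart v" unfolding v_def by (rule carrier_vec_eq_vec_of_cart[OF u(1)])
  have "v \<noteq> 0" using u(2) by (auto simp: u_eq vec_of_cart_zero)
  moreover have "cplx_mat M *v v = l *s v"
    using u(3) by (simp add: u_eq mat_of_cart_mult_vec flip: vec_of_cart_smult vec_of_cart_inject)
  ultimately show "l \<in> eigenvalues M" unfolding eigenvalues_def by blast
next
  assume "l \<in> eigenvalues M"
  then obtain v where v: "v \<noteq> 0" "cplx_mat M *v v = l *s v" unfolding eigenvalues_def by blast
  have "eigenvector (mat_of_cart (cplx_mat M)) (vec_of_cart v) l"
    using v vec_of_cart_inject[of v 0]
    by (auto simp: eigenvector_def mat_of_cart_carrier vec_of_cart_carrier vec_of_cart_zero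
        mat_of_cart_mult_vec vec_of_cart_smult)
  then show "eigenvalue (mat_of_cart (cplx_mat M)) l" unfolding eigenvalue_def by blast
qed

lemma spectrum_mat_of_cart: "Spectral_Radius.spectrum (mat_of_cart (cplx_mat M)) = eigenvalues M"
  unfolding Spectral_Radius.spectrum_def by (auto simp: eigenvalue_mat_of_cart_iff)

lemma finite_eigenvalues: "finite (eigenvalues M)"
  using card_finite_spectrum(1)[OF mat_of_cart_carrier[of "cplx_mat M"]] by (simp add: spectrum_mat_of_cart)

lemma eigenvalues_nonempty: "eigenvalues M \<noteq> {}"
  using spectrum_non_empty[OF mat_of_cart_carrier[of "cplx_mat M"]] by (simp add: spectrum_mat_of_cart)

lemma spectral_radius_mat_of_cart:
  "Spectral_Radius.spectral_radius (mat_of_cart (cplx_mat M)) = Defs.spectral_radius M"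
  unfolding Spectral_Radius.spectral_radius_def Defs.spectral_radius_def spectrum_mat_of_cart ..

lemma cmod_le_spectral_radius: "l \<in> eigenvalues M \<Longrightarrow> cmod l \<le> Defs.spectral_radius M"
  unfolding Defs.spectral_radius_def using finite_eigenvalues by (intro Max_ge) auto

lemma spectral_radius_nonneg: "0 \<le> Defs.spectral_radius M"
  using eigenvalues_nonempty cmod_le_spectral_radius norm_ge_zero by (metis ex_in_conv order_trans)

lemma eigenvalue_scaleR_div:
  assumes "l \<in> eigenvalues (a *\<^sub>R M)" "a \<noteq> 0"
  shows "l / complex_of_real a \<in> eigenvalues M"
proof -
  obtain v where v: "v \<noteq> 0" "cplx_mat (a *\<^sub>R M) *v v = l *s v"
    using assms(1) unfolding eigenvalues_def by blast
  have "cplx_mat (a *\<^sub>R M) *v v = complex_of_real a *s (cplx_mat M *v v)"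
    by (simp add: cplx_mat_def matrix_vector_mult_def Finite_Cartesian_Product.vec_eq_iff
        sum_distrib_left mult.assoc)
  with v(2) assms(2) have "cplx_mat M *v v = (l / complex_of_real a) *s v"
    by (simp add: Finite_Cartesian_Product.vec_eq_iff field_simps)
  with v(1) show ?thesis unfolding eigenvalues_def by blast
qed

lemma cplx_mat_mult: "cplx_mat (A ** B) = cplx_mat A ** cplx_mat B"
  unfolding cplx_mat_def matrix_matrix_mult_def by (simp add: Finite_Cartesian_Product.vec_eq_iff)

lemma cplx_mat_one: "cplx_mat (Finite_Cartesian_Product.mat 1) = Finite_Cartesian_Product.mat 1"
  unfolding cplx_mat_def Finite_Cartesian_Product.mat_def
  by (simp add: Finite_Cartesian_Product.vec_eq_iff)

lemma cplx_mat_matpow: "cplx_mat (matpow M t) = matpow (cplx_mat M) t"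
  by (induction t) (simp_all add: cplx_mat_one cplx_mat_mult)

lemma bounded_matpow_of_spectral_radius_lt_1:
  assumes "Defs.spectral_radius M < 1"
  obtains c where "\<And>t i j. \<bar>matpow M t $ i $ j\<bar> \<le> c"
proof -
  obtain c where c: "\<And>t. norm_bound (mat_of_cart (cplx_mat M) ^\<^sub>m t) c"
    using spectral_radius_jnf_norm_bound_less_1_upper_triangular[OF mat_of_cart_carrier[of "cplx_mat M"]]
      assms by (auto simp: spectral_radius_mat_of_cart)
  have "\<bar>matpow M t $ i $ j\<bar> \<le> c" for t i j
  proof -
    have "norm ((mat_of_cart (cplx_mat M) ^\<^sub>m t) $$ (cart_pos i, cart_pos j)) \<le> c"
      using c[of t] cart_pos_less[of i] cart_pos_less[of j] mat_of_cart_carrier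
      unfolding norm_bound_def by (metis pow_mat_dim_square)
    then have "cmod (cplx_mat (matpow M t) $ i $ j) \<le> c"
      by (simp flip: mat_of_cart_matpow cplx_mat_matpow add: mat_of_cart_entry)
    then show ?thesis by (simp add: cplx_mat_def)
  qed
  then show thesis by (rule that)
qed

section \<open>The entrywise l1 norm\<close>

definition l1_norm :: "real^'a::finite^'b::finite \<Rightarrow> real" where
  "l1_norm A = (\<Sum>i\<in>UNIV. \<Sum>j\<in>UNIV. \<bar>A $ i $ j\<bar>)"

lemma l1_norm_nonneg: "0 \<le> l1_norm A"
  unfolding l1_norm_def by (intro sum_nonneg) auto

lemma l1_norm_zero [simp]: "l1_norm 0 = 0"
  unfolding l1_norm_def by simp

lemma l1_norm_add: "l1_norm (A + B) \<le> l1_norm A + l1_norm B"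
  unfolding l1_norm_def sum.distrib[symmetric] by (intro sum_mono) (auto intro: abs_triangle_ineq)

lemma l1_norm_sum: "finite S \<Longrightarrow> l1_norm (sum f S) \<le> (\<Sum>x\<in>S. l1_norm (f x))"
  by (induction S rule: finite_induct) (auto intro: order_trans[OF l1_norm_add])

lemma l1_norm_transpose: "l1_norm (transpose A) = l1_norm A"
  unfolding l1_norm_def transpose_def by (simp, rule sum.swap)

lemma l1_norm_mat_1: "l1_norm (Finite_Cartesian_Product.mat 1 :: real^'k::finite^'k) = CARD('k)"
  unfolding l1_norm_def Finite_Cartesian_Product.mat_def by (simp add: if_distrib cong: if_cong)

lemma row_l1_le_l1_norm: "(\<Sum>j\<in>UNIV. \<bar>A $ i $ j\<bar>) \<le> l1_norm A"
  unfolding l1_norm_def by (rule member_le_sum[where f = "\<lambda>i. \<Sum>j\<in>UNIV. \<bar>A $ i $ j\<bar>"]) (auto intro: sum_nonneg)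

lemma l1_norm_mult: "l1_norm (A ** B) \<le> l1_norm A * l1_norm B"
proof -
  have "l1_norm (A ** B) \<le> (\<Sum>i\<in>UNIV. \<Sum>j\<in>UNIV. \<Sum>k\<in>UNIV. \<bar>A $ i $ k\<bar> * \<bar>B $ k $ j\<bar>)"
    unfolding l1_norm_def matrix_matrix_mult_def
    by (auto intro!: sum_mono order.trans[OF sum_abs] simp: abs_mult)
  also have "\<dots> = (\<Sum>i\<in>UNIV. \<Sum>k\<in>UNIV. \<bar>A $ i $ k\<bar> * (\<Sum>j\<in>UNIV. \<bar>B $ k $ j\<bar>))"
    by (simp add: sum_distrib_left, intro sum.cong refl, rule sum.swap)
  also have "\<dots> \<le> (\<Sum>i\<in>UNIV. \<Sum>k\<in>UNIV. \<bar>A $ i $ k\<bar> * l1_norm B)"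
    by (intro sum_mono mult_left_mono row_l1_le_l1_norm) auto
  also have "\<dots> = l1_norm A * l1_norm B" unfolding l1_norm_def by (simp add: sum_distrib_right)
  finally show ?thesis .
qed

lemma l1_norm_mult3: "l1_norm (A ** B ** C) \<le> l1_norm A * l1_norm B * l1_norm C"
  by (meson l1_norm_mult l1_norm_nonneg mult_right_mono order_trans)

lemma l1_norm_congruence: "l1_norm (transpose L ** N ** L) \<le> l1_norm L ^ 2 * l1_norm N"
  using l1_norm_mult3[of "transpose L" N L] by (simp add: l1_norm_transpose power2_eq_square mult_ac)

lemma l1_norm_congruence_diff_le:
  "l1_norm (transpose A ** W ** A - transpose B ** W ** B)
     \<le> l1_norm (A - B) * l1_norm W * (l1_norm A + l1_norm B)"
proof -
  have "transpose A ** W ** A - transpose B ** W ** B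
      = transpose (A - B) ** W ** A + transpose B ** W ** (A - B)"
    by (simp add: matrix_distribs transpose_diff)
  then have "l1_norm (transpose A ** W ** A - transpose B ** W ** B)
      \<le> l1_norm (transpose (A - B) ** W ** A) + l1_norm (transpose B ** W ** (A - B))"
    by (simp add: l1_norm_add)
  also have "\<dots> \<le> l1_norm (A - B) * l1_norm W * l1_norm A + l1_norm B * l1_norm W * l1_norm (A - B)"
    by (intro add_mono order_trans[OF l1_norm_mult3]) (simp_all add: l1_norm_transpose)
  finally show ?thesis by (simp add: algebra_simps)
qed

lemma norm_le_l1_norm: "norm A \<le> l1_norm A"
proof -
  have "norm A \<le> (\<Sum>i\<in>UNIV. norm (A $ i))"
    unfolding norm_vec_def by (rule L2_set_le_sum) simp
  also have "\<dots> \<le> l1_norm A" unfolding l1_norm_def by (intro sum_mono norm_le_l1_cart[simplified])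
  finally show ?thesis .
qed

lemma l1_norm_le_norm: "l1_norm (A :: real^'a::finite^'b::finite) \<le> CARD('b) * CARD('a) * norm A"
proof -
  have "\<bar>A $ i $ j\<bar> \<le> norm A" for i j
    using component_le_norm_cart Finite_Cartesian_Product.norm_nth_le order_trans by blast
  then have "l1_norm A \<le> (\<Sum>i\<in>(UNIV::'b set). \<Sum>j\<in>(UNIV::'a set). norm A)"
    unfolding l1_norm_def by (intro sum_mono)
  then show ?thesis by simp
qed

lemma abs_inner_le_l1_norm: "\<bar>A \<bullet> B\<bar> \<le> l1_norm A * l1_norm B"
  using Cauchy_Schwarz_ineq2[of A B] norm_le_l1_norm[of A] norm_le_l1_norm[of B]
  by (meson mult_mono norm_ge_zero l1_norm_nonneg order_trans)

lemma linear_l1_norm_bound: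
  fixes f :: "'a::euclidean_space \<Rightarrow> real^'c::finite^'b::finite"
  assumes "linear f"
  obtains K where "0 \<le> K" "\<And>x. l1_norm (f x) \<le> K * norm x"
proof -
  obtain B where B: "B > 0" "\<And>x. norm (f x) \<le> B * norm x"
    using linear_bounded_pos[OF assms] by blast
  have "l1_norm (f x) \<le> (CARD('b) * CARD('c) * B) * norm x" for x
  proof -
    have "l1_norm (f x) \<le> CARD('b) * CARD('c) * norm (f x)" by (rule l1_norm_le_norm)
    also have "\<dots> \<le> CARD('b) * CARD('c) * (B * norm x)" by (intro mult_left_mono B(2)) auto
    finally show ?thesis by (simp add: mult.assoc)
  qed
  with B(1) show thesis by (intro that[of "CARD('b) * CARD('c) * B"]) auto
qed

lemma summable_of_l1_norm_geometric:
  fixes f :: "nat \<Rightarrow> real^'a::finite^'b::finite"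
  assumes "\<And>t. l1_norm (f t) \<le> K * r ^ t" "0 \<le> r" "r < 1"
  shows "summable f"
proof (rule summable_comparison_test')
  show "summable (\<lambda>t. K * r ^ t)" using assms by (intro summable_mult summable_geometric) simp
  show "norm (f t) \<le> K * r ^ t" for t using norm_le_l1_norm[of "f t"] assms(1)[of t] by linarith
qed

lemma l1_norm_suminf_le:
  fixes f :: "nat \<Rightarrow> real^'a::finite^'b::finite" and g :: "nat \<Rightarrow> real"
  assumes "\<And>t. l1_norm (f t) \<le> g t" "summable g"
  shows "l1_norm (suminf f) \<le> CARD('b) * CARD('a) * suminf g"
proof -
  have bound: "norm (f t) \<le> g t" for t by (rule order_trans[OF norm_le_l1_norm assms(1)])
  then have summable: "summable (\<lambda>t. norm (f t))"
    by (intro summable_comparison_test'[OF assms(2)]) auto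
  have "norm (suminf f) \<le> suminf g"
    using summable_norm[OF summable] suminf_le[OF _ summable assms(2)] bound by (meson order_trans)
  then show ?thesis
    using l1_norm_le_norm[of "suminf f"] by (meson mult_left_mono of_nat_0_le_iff
        mult_nonneg_nonneg order_trans)
qed

section \<open>Geometric decay of matrix powers\<close>

definition pow_decay :: "real^'k::finite^'k \<Rightarrow> real \<Rightarrow> real \<Rightarrow> bool" where
  "pow_decay M c r \<longleftrightarrow> 0 \<le> r \<and> r < 1 \<and> (\<forall>t. l1_norm (matpow M t) \<le> c * r ^ t)"

lemma pow_decay_const_ge_1:
  assumes "pow_decay (M :: real^'k::finite^'k) c r"
  shows "1 \<le> c"
proof -
  have "real CARD('k) \<le> c"
    using assms l1_norm_mat_1[where 'k = 'k] unfolding pow_decay_def by (metis matpow.simps(1) mult_1_right power_0)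
  moreover have "1 \<le> real CARD('k)" by (simp add: Suc_leI)
  ultimately show ?thesis by linarith
qed

lemma pow_decay_transpose: "pow_decay M c r \<Longrightarrow> pow_decay (transpose M) c r"
  unfolding pow_decay_def by (simp add: matpow_transpose l1_norm_transpose)

lemma pow_decay_square:
  assumes "pow_decay M c r"
  shows "0 \<le> r * r" "r * r < 1"
  using assms mult_strict_mono[of r 1 r 1] unfolding pow_decay_def by simp_all

(* For \<rho>(M) < s < 1 the matrix M / s still has spectral radius below 1, hence bounded powers. *)
lemma pow_decay_of_spectral_radius_lt_1:
  fixes M :: "real^'k::finite^'k"
  assumes "Defs.spectral_radius M < 1"
  obtains c r where "pow_decay M c r"
proof -
  define s where "s = (Defs.spectral_radius M + 1) / 2"
  have s: "0 < s" "s < 1" "Defs.spectral_radius M < s"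
    using assms spectral_radius_nonneg[of M] unfolding s_def by auto
  have "cmod l < 1" if l: "l \<in> eigenvalues ((1 / s) *\<^sub>R M)" for l
  proof -
    have "cmod (l / complex_of_real (1 / s)) \<le> Defs.spectral_radius M"
      using eigenvalue_scaleR_div[OF l] s by (intro cmod_le_spectral_radius) simp
    then have "cmod l * s \<le> Defs.spectral_radius M" using s by (simp add: norm_divide norm_mult)
    then have "cmod l * s < 1 * s" using s by linarith
    then show ?thesis using s(1) by (simp only: mult_less_cancel_right_pos)
  qed
  then have "Defs.spectral_radius ((1 / s) *\<^sub>R M) < 1"
    unfolding Defs.spectral_radius_def
    using finite_eigenvalues[of "(1 / s) *\<^sub>R M"] eigenvalues_nonempty[of "(1 / s) *\<^sub>R M"]
    by (simp add: Max_less_iff)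
  then obtain c0 where c0: "\<And>t i j. \<bar>matpow ((1 / s) *\<^sub>R M) t $ i $ j\<bar> \<le> c0"
    using bounded_matpow_of_spectral_radius_lt_1 by blast
  have "\<bar>matpow M t $ i $ j\<bar> \<le> c0 * s ^ t" for t i j
    using c0[of t i j] s(1) by (simp add: matpow_scaleR abs_mult power_one_over field_simps)
  then have "l1_norm (matpow M t) \<le> (CARD('k) * CARD('k) * c0) * s ^ t" for t
    unfolding l1_norm_def by (rule order_trans[OF sum_mono[OF sum_mono]]) (simp add: mult_ac)
  with s show thesis by (intro that[of "CARD('k) * CARD('k) * c0" s]) (auto simp: pow_decay_def)
qed

lemma l1_norm_perturbation_sum_le:
  assumes M0: "\<And>t. l1_norm (matpow M0 t) \<le> c * r ^ t" and "0 \<le> c" "0 \<le> r" "0 \<le> q"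
    and M: "\<And>s. s < t \<Longrightarrow> l1_norm (matpow M s) \<le> c * q ^ s"
  shows "l1_norm (\<Sum>s<t. matpow M0 (t - 1 - s) ** (M - M0) ** matpow M s)
     \<le> (\<Sum>s<t. (c * r ^ (t - 1 - s)) * l1_norm (M - M0) * (c * q ^ s))"
proof (rule order_trans[OF l1_norm_sum sum_mono])
  fix s assume "s \<in> {..<t}"
  then show "l1_norm (matpow M0 (t - 1 - s) ** (M - M0) ** matpow M s)
      \<le> (c * r ^ (t - 1 - s)) * l1_norm (M - M0) * (c * q ^ s)"
    using assms M0[of "t - 1 - s"] M[of s]
    by (intro order_trans[OF l1_norm_mult3] mult_mono) (auto intro!: mult_nonneg_nonneg l1_norm_nonneg)
qed simp

lemma l1_norm_matpow_perturb_le: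
  assumes M0: "\<And>t. l1_norm (matpow M0 t) \<le> c * r ^ t" and c: "0 \<le> c" and r: "0 \<le> r"
  shows "l1_norm (matpow M t) \<le> c * (r + c * l1_norm (M - M0)) ^ t"
proof (induction t rule: less_induct)
  case (less t)
  define d where "d = l1_norm (M - M0)"
  define q where "q = r + c * d"
  have q: "0 \<le> q" unfolding q_def d_def using c r l1_norm_nonneg[of "M - M0"] by simp
  have "l1_norm (matpow M t)
      \<le> l1_norm (matpow M0 t) + l1_norm (\<Sum>s<t. matpow M0 (t - 1 - s) ** (M - M0) ** matpow M s)"
    by (subst matpow_perturbation[of M t M0]) (rule l1_norm_add)
  also have "\<dots> \<le> c * r ^ t + (\<Sum>s<t. (c * r ^ (t - 1 - s)) * d * (c * q ^ s))"
    unfolding d_def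
    by (intro add_mono M0 l1_norm_perturbation_sum_le[OF M0 c r q])
       (use less in \<open>simp add: q_def d_def\<close>)
  also have "(\<Sum>s<t. (c * r ^ (t - 1 - s)) * d * (c * q ^ s))
      = c * ((q - r) * (\<Sum>s<t. r ^ (t - 1 - s) * q ^ s))"
    by (simp add: q_def sum_distrib_left algebra_simps)
  also have "\<dots> = c * (q ^ t - r ^ t)" by (simp add: power_diff_sumr2)
  finally show ?case by (simp add: q_def d_def algebra_simps)
qed

lemma l1_norm_matpow_diff_le:
  assumes M0: "\<And>t. l1_norm (matpow M0 t) \<le> c * r ^ t" and c: "0 \<le> c" and r: "0 \<le> r"
  shows "l1_norm (matpow M t - matpow M0 t)
    \<le> c * c * l1_norm (M - M0) * (t * (r + c * l1_norm (M - M0)) ^ (t - 1))"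
proof -
  define d where "d = l1_norm (M - M0)"
  define q where "q = r + c * d"
  have d: "0 \<le> d" unfolding d_def by (rule l1_norm_nonneg)
  have q: "r \<le> q" "0 \<le> q" unfolding q_def using c r d by simp_all
  have "l1_norm (matpow M t - matpow M0 t) = l1_norm (\<Sum>s<t. matpow M0 (t - 1 - s) ** (M - M0) ** matpow M s)"
    by (subst matpow_perturbation[of M t M0]) simp
  also have "\<dots> \<le> (\<Sum>s<t. (c * r ^ (t - 1 - s)) * d * (c * q ^ s))"
    unfolding d_def
    by (rule l1_norm_perturbation_sum_le[OF M0 c r q(2)])
       (use l1_norm_matpow_perturb_le[OF M0 c r] in \<open>simp add: q_def d_def\<close>)
  also have "\<dots> \<le> (\<Sum>s<t. c * c * d * q ^ (t - 1))"
  proof (rule sum_mono)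
    fix s assume s: "s \<in> {..<t}"
    have "r ^ (t - 1 - s) * q ^ s \<le> q ^ (t - 1 - s) * q ^ s"
      using q r by (intro mult_right_mono power_mono) simp_all
    also have "\<dots> = q ^ (t - 1)" using s by (simp add: power_add[symmetric])
    finally have "c * c * d * (r ^ (t - 1 - s) * q ^ s) \<le> c * c * d * q ^ (t - 1)"
      using c d by (intro mult_left_mono) simp_all
    then show "(c * r ^ (t - 1 - s)) * d * (c * q ^ s) \<le> c * c * d * q ^ (t - 1)"
      by (simp add: algebra_simps)
  qed
  also have "\<dots> = c * c * d * (t * q ^ (t - 1))" by simp
  finally show ?thesis by (simp add: q_def d_def)
qed

lemma pow_decay_perturb:
  assumes decay: "pow_decay M0 c s" and near: "l1_norm (M - M0) \<le> (1 - s) / (2 * c)"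
  shows "pow_decay M c ((1 + s) / 2)"
    and "l1_norm (matpow M t - matpow M0 t)
           \<le> c * c * l1_norm (M - M0) * (t * ((1 + s) / 2) ^ (t - 1))"
proof -
  have c: "0 \<le> c" using pow_decay_const_ge_1[OF decay] by simp
  have s: "0 \<le> s" "s < 1" and M0: "\<And>t. l1_norm (matpow M0 t) \<le> c * s ^ t"
    using decay unfolding pow_decay_def by auto
  have d: "0 \<le> l1_norm (M - M0)" by (rule l1_norm_nonneg)
  have q: "0 \<le> s + c * l1_norm (M - M0)" "s + c * l1_norm (M - M0) \<le> (1 + s) / 2"
    using near pow_decay_const_ge_1[OF decay] s d by (simp_all add: field_simps)
  have "l1_norm (matpow M t) \<le> c * ((1 + s) / 2) ^ t" for t
  proof -
    have "l1_norm (matpow M t) \<le> c * (s + c * l1_norm (M - M0)) ^ t"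
      by (rule l1_norm_matpow_perturb_le[OF M0 c s(1)])
    also have "\<dots> \<le> c * ((1 + s) / 2) ^ t" using c q by (intro mult_left_mono power_mono)
    finally show ?thesis .
  qed
  with s show "pow_decay M c ((1 + s) / 2)" unfolding pow_decay_def by simp
  have "l1_norm (matpow M t - matpow M0 t)
      \<le> c * c * l1_norm (M - M0) * (t * (s + c * l1_norm (M - M0)) ^ (t - 1))"
    by (rule l1_norm_matpow_diff_le[OF M0 c s(1)])
  also have "\<dots> \<le> c * c * l1_norm (M - M0) * (t * ((1 + s) / 2) ^ (t - 1))"
    using c q d by (intro mult_left_mono power_mono) simp_all
  finally show "l1_norm (matpow M t - matpow M0 t)
      \<le> c * c * l1_norm (M - M0) * (t * ((1 + s) / 2) ^ (t - 1))" .
qed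

section \<open>Lyapunov series\<close>

definition lyap_sum :: "real^'k::finite^'k \<Rightarrow> real^'k^'k \<Rightarrow> real^'k^'k" where
  "lyap_sum M W = (\<Sum>t. transpose (matpow M t) ** W ** matpow M t)"

lemma l1_norm_lyap_term_le:
  assumes "pow_decay M c r"
  shows "l1_norm (transpose (matpow M t) ** W ** matpow M t) \<le> (c * c * l1_norm W) * (r * r) ^ t"
proof -
  have M: "l1_norm (matpow M t) \<le> c * r ^ t" "0 \<le> r"
    using assms unfolding pow_decay_def by auto
  have "l1_norm (transpose (matpow M t) ** W ** matpow M t) \<le> l1_norm (matpow M t) ^ 2 * l1_norm W"
    by (rule l1_norm_congruence)
  also have "\<dots> \<le> (c * r ^ t) ^ 2 * l1_norm W"
    using M by (intro mult_right_mono power_mono l1_norm_nonneg l1_norm_nonneg)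
  also have "\<dots> = (c * c * l1_norm W) * (r * r) ^ t"
    by (simp add: power2_eq_square power_mult_distrib algebra_simps)
  finally show ?thesis .
qed

lemma summable_lyap_terms:
  "pow_decay M c r \<Longrightarrow> summable (\<lambda>t. transpose (matpow M t) ** W ** matpow M t)"
  by (rule summable_of_l1_norm_geometric[OF l1_norm_lyap_term_le pow_decay_square])

lemma lyap_terms_tendsto_0:
  assumes "pow_decay M c r"
  shows "(\<lambda>t. transpose (matpow M t) ** W ** matpow M t) \<longlonglongrightarrow> 0"
proof (rule Lim_null_comparison)
  show "\<forall>\<^sub>F t in sequentially. norm (transpose (matpow M t) ** W ** matpow M t)
      \<le> (c * c * l1_norm W) * (r * r) ^ t"
    using l1_norm_lyap_term_le[OF assms] norm_le_l1_norm order_trans by (intro always_eventually) blast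
  show "(\<lambda>t. (c * c * l1_norm W) * (r * r) ^ t) \<longlonglongrightarrow> 0"
    using pow_decay_square[OF assms] by (intro tendsto_mult_right_zero LIMSEQ_power_zero) simp
qed

lemma lyap_sum_fixpoint:
  assumes "pow_decay M c r"
  shows "lyap_sum M W = W + transpose M ** lyap_sum M W ** M"
proof -
  let ?f = "\<lambda>t. transpose (matpow M t) ** W ** matpow M t"
  have "lyap_sum M W = ?f 0 + (\<Sum>t. ?f (Suc t))"
    unfolding lyap_sum_def using suminf_split_head[OF summable_lyap_terms[OF assms]] by simp
  also have "(\<Sum>t. ?f (Suc t)) = (\<Sum>t. transpose M ** ?f t ** M)"
    by (simp del: matpow.simps add: matpow_Suc_right matrix_transpose_mul matrix_mul_assoc)
  also have "\<dots> = transpose M ** lyap_sum M W ** M"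
    unfolding lyap_sum_def
    using bounded_linear.suminf[OF bounded_linear_matrix_sandwich[of "transpose M" M]
        summable_lyap_terms[OF assms]] by simp
  finally show ?thesis by simp
qed

lemma lyap_sum_unique:
  assumes decay: "pow_decay M c r" and Y: "Y = W + transpose M ** Y ** M"
  shows "Y = lyap_sum M W"
proof -
  define E where "E = Y - lyap_sum M W"
  have "E = (W + transpose M ** Y ** M) - (W + transpose M ** lyap_sum M W ** M)"
    unfolding E_def using Y lyap_sum_fixpoint[OF decay, of W] by simp
  also have "\<dots> = transpose M ** E ** M" unfolding E_def by (simp add: matrix_distribs)
  finally have E: "E = transpose M ** E ** M" .
  have "E = transpose (matpow M t) ** E ** matpow M t" for t
  proof (induction t)
    case (Suc t)
    have "transpose (matpow M (Suc t)) ** E ** matpow M (Suc t)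
        = transpose (matpow M t) ** (transpose M ** E ** M) ** matpow M t"
      by (simp add: matrix_transpose_mul matrix_mul_assoc)
    then show ?case using Suc E by simp
  qed simp
  then have "(\<lambda>t. E) \<longlonglongrightarrow> 0"
    using lyap_terms_tendsto_0[OF decay, of E] by simp
  then show ?thesis unfolding E_def by (simp add: LIMSEQ_const_iff)
qed

lemma lyap_quadratic_sums:
  assumes "pow_decay M c r"
  shows "(\<lambda>t. (matpow M t *v z) \<bullet> (W *v (matpow M t *v z))) sums (z \<bullet> (lyap_sum M W *v z))"
  using bounded_linear.sums[OF bounded_linear_quadratic_form summable_sums[OF summable_lyap_terms[OF assms]]]
  unfolding lyap_sum_def by (simp add: quadratic_form_sandwich)

lemma psd_lyap_sum:
  assumes "pow_decay M c r" "psd_mat W"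
  shows "psd_mat (lyap_sum M W)"
  unfolding psd_mat_def
proof
  have "transpose (lyap_sum M W) = (\<Sum>t. transpose (transpose (matpow M t) ** W ** matpow M t))"
    unfolding lyap_sum_def
    by (rule bounded_linear.suminf[OF bounded_linear_transpose summable_lyap_terms[OF assms(1)]])
  also have "\<dots> = lyap_sum M W"
    using assms(2) unfolding lyap_sum_def psd_mat_def by (simp add: matrix_transpose_mul matrix_mul_assoc)
  finally show "transpose (lyap_sum M W) = lyap_sum M W" .
  show "\<forall>x. 0 \<le> x \<bullet> (lyap_sum M W *v x)"
    using assms(2) unfolding psd_mat_def
    by (intro allI sums_le[OF _ sums_zero lyap_quadratic_sums[OF assms(1)]]) blast
qed

lemma lyap_sum_telescope:
  assumes "pow_decay M c r"
  shows "lyap_sum M (W + transpose M ** P ** M - P) = lyap_sum M W - P"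
proof -
  let ?f = "\<lambda>t. transpose (matpow M t) ** W ** matpow M t"
  let ?g = "\<lambda>t. transpose (matpow M t) ** P ** matpow M t"
  have telescoped: "transpose (matpow M t) ** (W + transpose M ** P ** M - P) ** matpow M t
      = ?f t + (?g (Suc t) - ?g t)" for t
    by (simp add: matrix_distribs matrix_transpose_mul matrix_mul_assoc)
  have "(\<lambda>t. ?g (Suc t) - ?g t) sums (0 - ?g 0)"
    by (rule telescope_sums[OF lyap_terms_tendsto_0[OF assms]])
  then have "(\<lambda>t. ?f t + (?g (Suc t) - ?g t)) sums (lyap_sum M W + (0 - ?g 0))"
    unfolding lyap_sum_def by (intro sums_add summable_sums summable_lyap_terms[OF assms])
  then show ?thesis unfolding lyap_sum_def telescoped by (simp add: sums_iff)
qed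

lemma inner_lyap_sum:
  assumes "pow_decay M c r"
  shows "lyap_sum M E \<bullet> X = E \<bullet> lyap_sum (transpose M) X"
proof -
  have "lyap_sum M E \<bullet> X = (\<Sum>t. (transpose (matpow M t) ** E ** matpow M t) \<bullet> X)"
    unfolding lyap_sum_def
    by (rule bounded_linear.suminf[OF bounded_linear_inner_left summable_lyap_terms[OF assms]])
  also have "\<dots> = (\<Sum>t. E \<bullet> (transpose (matpow (transpose M) t) ** X ** matpow (transpose M) t))"
    by (simp add: inner_matrix_sandwich matpow_transpose)
  also have "\<dots> = E \<bullet> lyap_sum (transpose M) X"
    unfolding lyap_sum_def
    by (rule bounded_linear.suminf[OF bounded_linear_inner_right
          summable_lyap_terms[OF pow_decay_transpose[OF assms]], symmetric])
  finally show ?thesis .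
qed

lemma l1_norm_lyap_sum_le:
  fixes M :: "real^'k::finite^'k"
  assumes "pow_decay M c r"
  shows "l1_norm (lyap_sum M W) \<le> CARD('k) * CARD('k) * (c * c * l1_norm W / (1 - r * r))"
proof -
  have sums: "(\<lambda>t. (c * c * l1_norm W) * (r * r) ^ t) sums ((c * c * l1_norm W) * (1 / (1 - r * r)))"
    using pow_decay_square[OF assms] by (intro sums_mult geometric_sums) simp
  have "l1_norm (lyap_sum M W) \<le> CARD('k) * CARD('k) * (\<Sum>t. (c * c * l1_norm W) * (r * r) ^ t)"
    unfolding lyap_sum_def
    by (rule l1_norm_suminf_le, rule l1_norm_lyap_term_le[OF assms], rule sums_summable[OF sums])
  with sums show ?thesis by (simp add: sums_iff)
qed

lemma summable_nat_mult_power: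
  assumes "0 \<le> q" "q < 1"
  shows "summable (\<lambda>t. real t * q ^ (t - 1))"
proof -
  have "summable (\<lambda>n. diffs (\<lambda>_. 1::real) n * q ^ n)"
    by (rule termdiff_converges[where K = 1]) (use assms in \<open>auto intro: summable_geometric\<close>)
  then have "summable (\<lambda>n. real (Suc n) * q ^ (Suc n - 1))" by (simp add: diffs_def)
  then show ?thesis by (subst summable_Suc_iff[symmetric])
qed

lemma lyap_sum_lipschitz:
  fixes M0 W :: "real^'k::finite^'k"
  assumes decay: "pow_decay M0 c s"
  obtains K where "\<And>M. l1_norm (M - M0) \<le> (1 - s) / (2 * c) \<Longrightarrow>
    l1_norm (lyap_sum M W - lyap_sum M0 W) \<le> K * l1_norm (M - M0)"
proof -
  define q where "q = (1 + s) / 2"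
  have s: "0 \<le> s" "s < 1" using decay unfolding pow_decay_def by auto
  then have q: "0 \<le> q" "q < 1" unfolding q_def by simp_all
  have c: "0 \<le> c" using pow_decay_const_ge_1[OF decay] by simp
  define K where "K = CARD('k) * CARD('k) * ((2 * c ^ 3 * l1_norm W) * (\<Sum>t. t * q ^ (t - 1)))"
  have "l1_norm (lyap_sum M W - lyap_sum M0 W) \<le> K * l1_norm (M - M0)"
    if near: "l1_norm (M - M0) \<le> (1 - s) / (2 * c)" for M
  proof -
    define d where "d = l1_norm (M - M0)"
    have decay_M: "pow_decay M c q" unfolding q_def by (rule pow_decay_perturb(1)[OF decay near])
    have le_c: "l1_norm (matpow N t) \<le> c" if "pow_decay N c r" for N :: "real^'k^'k" and r t
      using that power_le_one[of r t] c unfolding pow_decay_def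
      by (meson mult_left_le order_trans less_imp_le)
    have terms: "l1_norm (transpose (matpow M t) ** W ** matpow M t - transpose (matpow M0 t) ** W ** matpow M0 t)
        \<le> (2 * c ^ 3 * l1_norm W * d) * (t * q ^ (t - 1))" for t
    proof -
      have "l1_norm (matpow M t) + l1_norm (matpow M0 t) \<le> 2 * c"
        using le_c[OF decay_M, of t] le_c[OF decay, of t] by linarith
      then have "l1_norm (matpow M t - matpow M0 t) * l1_norm W * (l1_norm (matpow M t) + l1_norm (matpow M0 t))
          \<le> (c * c * d * (t * q ^ (t - 1))) * l1_norm W * (2 * c)"
        using pow_decay_perturb(2)[OF decay near, of t] c s unfolding q_def d_def
        by (intro mult_mono l1_norm_nonneg mult_nonneg_nonneg add_nonneg_nonneg) auto
      then show ?thesis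
        using l1_norm_congruence_diff_le[of "matpow M t" W "matpow M0 t"]
        by (simp add: power3_eq_cube algebra_simps)
    qed
    have "lyap_sum M W - lyap_sum M0 W
        = (\<Sum>t. transpose (matpow M t) ** W ** matpow M t - transpose (matpow M0 t) ** W ** matpow M0 t)"
      unfolding lyap_sum_def
      by (rule suminf_diff[OF summable_lyap_terms[OF decay_M] summable_lyap_terms[OF decay]])
    also have "l1_norm \<dots> \<le> CARD('k) * CARD('k) * (\<Sum>t. (2 * c ^ 3 * l1_norm W * d) * (t * q ^ (t - 1)))"
      by (rule l1_norm_suminf_le[OF terms summable_mult[OF summable_nat_mult_power[OF q]]])
    also have "\<dots> = K * d"
      unfolding K_def using suminf_mult[OF summable_nat_mult_power[OF q], of "2 * c ^ 3 * l1_norm W * d"]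
      by simp
    finally show ?thesis unfolding d_def .
  qed
  then show thesis by (rule that)
qed

lemma lyap_sum_transpose_local_bounds:
  fixes M0 X :: "real^'k::finite^'k"
  assumes decay: "pow_decay M0 c s"
  obtains \<rho> K1 K2 where "0 < \<rho>"
    and "\<And>M. l1_norm (M - M0) \<le> \<rho> \<Longrightarrow> pow_decay M c ((1 + s) / 2)"
    and "\<And>M. l1_norm (M - M0) \<le> \<rho> \<Longrightarrow>
      l1_norm (lyap_sum (transpose M) X - lyap_sum (transpose M0) X) \<le> K1 * l1_norm (M - M0)"
    and "\<And>M. l1_norm (M - M0) \<le> \<rho> \<Longrightarrow> l1_norm (lyap_sum (transpose M) X) \<le> K2"
proof -
  define \<rho> where "\<rho> = (1 - s) / (2 * c)"
  have "0 < \<rho>" using pow_decay_const_ge_1[OF decay] decay unfolding \<rho>_def pow_decay_def by simp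
  obtain K1 where K1: "\<And>M. l1_norm (M - transpose M0) \<le> (1 - s) / (2 * c) \<Longrightarrow>
      l1_norm (lyap_sum M X - lyap_sum (transpose M0) X) \<le> K1 * l1_norm (M - transpose M0)"
    using lyap_sum_lipschitz[OF pow_decay_transpose[OF decay]] by blast
  have transpose_dist: "l1_norm (transpose M - transpose M0) = l1_norm (M - M0)" for M :: "real^'k^'k"
    by (simp flip: transpose_diff add: l1_norm_transpose)
  define K2 where "K2 = CARD('k) * CARD('k) * (c * c * l1_norm X / (1 - (1 + s) / 2 * ((1 + s) / 2)))"
  show thesis
  proof (rule that[OF \<open>0 < \<rho>\<close>])
    fix M assume near: "l1_norm (M - M0) \<le> \<rho>"
    show decay_M: "pow_decay M c ((1 + s) / 2)"
      using pow_decay_perturb(1)[OF decay] near unfolding \<rho>_def .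
    show "l1_norm (lyap_sum (transpose M) X - lyap_sum (transpose M0) X) \<le> K1 * l1_norm (M - M0)"
      using K1[of "transpose M"] near unfolding transpose_dist \<rho>_def .
    show "l1_norm (lyap_sum (transpose M) X) \<le> K2"
      unfolding K2_def by (rule l1_norm_lyap_sum_le[OF pow_decay_transpose[OF decay_M]])
  qed
qed

section \<open>Block matrices and the closed loop\<close>

lemma sum_UNIV_Plus:
  "(\<Sum>x\<in>(UNIV :: ('a::finite + 'b::finite) set). f x) = (\<Sum>a\<in>UNIV. f (Inl a)) + (\<Sum>b\<in>UNIV. f (Inr b))"
proof -
  have "(\<Sum>x\<in>(UNIV :: ('a + 'b) set). f x) = (\<Sum>x\<in>(UNIV <+> UNIV). f x)" by simp
  then show ?thesis by (simp only: sum.Plus[OF finite finite] comp_def)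
qed

definition blk21 :: "real^('c1::finite + 'c2::finite)^('r1::finite + 'r2::finite) \<Rightarrow> real^'c1^'r2" where
  "blk21 M = (\<chi> i j. M $ Inr i $ Inl j)"

lemma blk_add: "blk a b c d + blk a' b' c' d' = blk (a + a') (b + b') (c + c') (d + d')"
  unfolding blk_def by (simp add: Finite_Cartesian_Product.vec_eq_iff split: sum.split)

lemma blk_scaleR: "k *\<^sub>R blk a b c d = blk (k *\<^sub>R a) (k *\<^sub>R b) (k *\<^sub>R c) (k *\<^sub>R d)"
  unfolding blk_def by (simp add: Finite_Cartesian_Product.vec_eq_iff split: sum.split)

lemma blk_mult:
  "blk a b c d ** blk e f g h = blk (a ** e + b ** g) (a ** f + b ** h) (c ** e + d ** g) (c ** f + d ** h)"
  unfolding blk_def matrix_matrix_mult_def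
  by (simp add: Finite_Cartesian_Product.vec_eq_iff sum_UNIV_Plus split: sum.split)

lemma transpose_blk: "transpose (blk a b c d) = blk (transpose a) (transpose c) (transpose b) (transpose d)"
  unfolding blk_def transpose_def by (simp add: Finite_Cartesian_Product.vec_eq_iff split: sum.split)

lemma inner_blk: "blk a b c d \<bullet> blk e f g h = a \<bullet> e + b \<bullet> f + c \<bullet> g + d \<bullet> h"
  unfolding blk_def inner_vec_def by (simp add: sum_UNIV_Plus)

lemma blk_blocks: "blk (blk11 M) (blk12 M) (blk21 M) (blk22 M) = M"
  unfolding blk_def blk11_def blk12_def blk21_def blk22_def
  by (simp add: Finite_Cartesian_Product.vec_eq_iff split: sum.split)

lemma blocks_blk [simp]:
  "blk11 (blk a b c d) = a" "blk12 (blk a b c d) = b" "blk21 (blk a b c d) = c" "blk22 (blk a b c d) = d"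
  unfolding blk_def blk11_def blk12_def blk21_def blk22_def
  by (simp_all add: Finite_Cartesian_Product.vec_eq_iff)

lemma blk21_symmetric: "transpose M = M \<Longrightarrow> blk21 M = transpose (blk12 M)"
  unfolding blk21_def blk12_def transpose_def
  by (simp add: Finite_Cartesian_Product.vec_eq_iff symmetric_entry[of M "Inr _" "Inl _"])

lemma blk22_symmetric: "transpose M = M \<Longrightarrow> transpose (blk22 M) = blk22 M"
  unfolding blk22_def transpose_def
  by (simp add: Finite_Cartesian_Product.vec_eq_iff symmetric_entry[of M "Inr _" "Inr _"])

lemma symmetric_blk_blocks:
  "transpose M = M \<Longrightarrow> blk (blk11 M) (blk12 M) (transpose (blk12 M)) (blk22 M) = M"
  using blk_blocks[of M] blk21_symmetric[of M] by simp

lemma Fsel_sandwich: "Fsel ** Y ** transpose Fsel = blk22 (Y :: real^('n::finite + 'n)^('n + 'n))"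
  unfolding Fsel_def blk22_def matrix_matrix_mult_def transpose_def
  by (simp add: Finite_Cartesian_Product.vec_eq_iff sum_UNIV_Plus if_distrib if_distribR cong: if_cong
      split: sum.split)

lemma xipart_eq_Fsel: "xipart z = (Fsel :: real^('n::finite + 'n)^'n) *v z"
  unfolding xipart_def Fsel_def matrix_vector_mult_def
  by (simp add: Finite_Cartesian_Product.vec_eq_iff sum_UNIV_Plus if_distrib if_distribR cong: if_cong)

lemma Kmat_add: "Kmat (a + a') (b + b') (c + c') = Kmat a b c + Kmat a' b' c'"
  unfolding Kmat_def by (simp add: blk_add)

lemma Kmat_scaleR: "Kmat (k *\<^sub>R a) (k *\<^sub>R b) (k *\<^sub>R c) = k *\<^sub>R Kmat a b c"
  unfolding Kmat_def by (simp add: blk_scaleR)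

lemma Acl_blk: "Acl A B C AK BK CK = blk A (B ** CK) (BK ** C) AK"
  unfolding Acl_def Abar_def Bbar_def Cbar_def Kmat_def by (simp add: blk_mult blk_add)

definition Acl_lin :: "real^'m::finite^'n::finite \<Rightarrow> real^'n^'d::finite
    \<Rightarrow> real^'n^'n \<Rightarrow> real^'d^'n \<Rightarrow> real^'n^'m \<Rightarrow> real^('n + 'n)^('n + 'n)" where
  "Acl_lin B C dA dB dC = Bbar B ** Kmat dA dB dC ** Cbar C"

lemma Acl_lin_add: "Acl_lin B C (a + a') (b + b') (c + c') = Acl_lin B C a b c + Acl_lin B C a' b' c'"
  unfolding Acl_lin_def by (simp add: Kmat_add matrix_distribs)

lemma Acl_lin_scaleR: "Acl_lin B C (k *\<^sub>R a) (k *\<^sub>R b) (k *\<^sub>R c) = k *\<^sub>R Acl_lin B C a b c"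
  unfolding Acl_lin_def by (simp add: Kmat_scaleR matrix_scalar_ac scalar_matrix_assoc)

lemma Acl_add: "Acl A B C (AK + dA) (BK + dB) (CK + dC) = Acl A B C AK BK CK + Acl_lin B C dA dB dC"
  unfolding Acl_def Acl_lin_def by (simp add: Kmat_add matrix_distribs)

lemma linear_Acl_lin: "linear (\<lambda>(dA, dB, dC). Acl_lin B C dA dB dC)"
  by (intro linearI) (auto simp: Acl_lin_add Acl_lin_scaleR)

lemma linear_mult_Fsel: "linear (\<lambda>(dA :: real^'n::finite^'n, dB :: real^'d::finite^'n, dC :: real^'n^'m::finite).
    dC ** (Fsel :: real^('n + 'n)^'n))"
  by (intro linearI) (auto simp: matrix_add_rdistrib scalar_matrix_assoc)

section \<open>The cost as a Lyapunov pairing\<close>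

definition stage_cost_mat :: "real^'n::finite^'n \<Rightarrow> real^'m::finite^'m \<Rightarrow> real^'n^'m \<Rightarrow> real^('n + 'n)^('n + 'n)" where
  "stage_cost_mat Q R CK = Qbar Q + transpose Fsel ** transpose CK ** R ** CK ** Fsel"

lemma quadratic_form_Qbar: "z \<bullet> (Qbar Q *v z) = xpart z \<bullet> (Q *v xpart (z :: real^('n::finite + 'n)))"
  unfolding Qbar_def blk_def xpart_def matrix_vector_mult_def inner_vec_def
  by (simp add: sum_UNIV_Plus)

lemma quadratic_form_stage_cost:
  "z \<bullet> (stage_cost_mat Q R CK *v z)
     = xpart z \<bullet> (Q *v xpart z) + (CK *v xipart z) \<bullet> (R *v (CK *v xipart (z :: real^('n::finite + 'n))))"
proof -
  have "transpose Fsel ** transpose CK ** R ** CK ** Fsel = transpose (CK ** Fsel) ** R ** (CK ** Fsel)"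
    by (simp add: matrix_transpose_mul matrix_mul_assoc)
  then have "z \<bullet> ((transpose Fsel ** transpose CK ** R ** CK ** Fsel) *v z)
      = ((CK ** Fsel) *v z) \<bullet> (R *v ((CK ** Fsel) *v z))"
    by (simp only: quadratic_form_sandwich)
  then show ?thesis
    unfolding stage_cost_mat_def
    by (simp add: matrix_vector_mult_add_rdistrib inner_add_right quadratic_form_Qbar xipart_eq_Fsel
        matrix_vector_mul_assoc[symmetric])
qed

lemma psd_stage_cost_mat:
  assumes "psd_mat Q" "pd_mat R"
  shows "psd_mat (stage_cost_mat Q R CK)"
  unfolding psd_mat_def
proof (intro conjI allI)
  have "transpose Q = Q" "transpose R = R" using assms unfolding psd_mat_def pd_mat_def by auto
  then show "transpose (stage_cost_mat Q R CK) = stage_cost_mat Q R CK"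
    unfolding stage_cost_mat_def Qbar_def
    by (simp add: transpose_add transpose_blk transpose_zero matrix_transpose_mul matrix_mul_assoc)
  have "0 \<le> x \<bullet> (Q *v x)" "0 \<le> y \<bullet> (R *v y)" for x y
    using assms unfolding psd_mat_def pd_mat_def by (cases "y = 0"; force)+
  then show "0 \<le> z \<bullet> (stage_cost_mat Q R CK *v z)" for z
    by (simp add: quadratic_form_stage_cost)
qed

lemma integrable_component_mult:
  assumes "sets D = sets borel" "integrable D (\<lambda>z. norm z ^ 2)"
  shows "integrable D (\<lambda>z :: real^'k::finite. z $ i * z $ j)"
proof (rule Bochner_Integration.integrable_bound[OF assms(2)])
  have "(\<lambda>z :: real^'k. z $ i * z $ j) \<in> borel_measurable borel"
    by (intro borel_measurable_continuous_onI continuous_intros)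
  then show "(\<lambda>z :: real^'k. z $ i * z $ j) \<in> borel_measurable D"
    using measurable_cong_sets[OF assms(1) refl] by blast
  have "\<bar>z $ i\<bar> * \<bar>z $ j\<bar> \<le> norm z * norm z" for z :: "real^'k"
    by (intro mult_mono component_le_norm_cart) auto
  then show "AE z in D. norm (z $ i * z $ j) \<le> norm (norm z ^ 2)"
    by (simp add: abs_mult power2_eq_square)
qed

lemma integral_quadratic_form:
  fixes D :: "(real^('n::finite + 'n)) measure"
  assumes "sets D = sets borel" "integrable D (\<lambda>z. norm z ^ 2)"
  shows "(\<integral>z. z \<bullet> (Y *v z) \<partial>D) = Y \<bullet> Xmom D"
proof -
  note integrable = integrable_component_mult[OF assms]
  have "(\<integral>z. z \<bullet> (Y *v z) \<partial>D) = (\<Sum>i\<in>UNIV. \<Sum>j\<in>UNIV. Y $ i $ j * (\<integral>z. z $ i * z $ j \<partial>D))"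
    unfolding quadratic_form_eq_sum by (simp add: integrable)
  also have "\<dots> = Y \<bullet> Xmom D"
    unfolding inner_vec_def Xmom_def by (simp add: inner_real_def)
  finally show ?thesis .
qed

lemma psd_Xmom:
  assumes "sets D = sets borel" "integrable D (\<lambda>z. norm z ^ 2)"
  shows "psd_mat (Xmom (D :: (real^('n::finite + 'n)) measure))"
  unfolding psd_mat_def
proof (intro conjI allI)
  show "transpose (Xmom D) = Xmom D"
    unfolding transpose_def Xmom_def by (simp add: Finite_Cartesian_Product.vec_eq_iff mult.commute)
  fix x :: "real^('n + 'n)"
  define Y :: "real^('n + 'n)^('n + 'n)" where "Y = (\<chi> i j. x $ i * x $ j)"
  have "x \<bullet> (Xmom D *v x) = Y \<bullet> Xmom D"
    unfolding Y_def quadratic_form_eq_sum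
    by (simp add: inner_vec_def inner_real_def matrix_vector_mult_def sum_distrib_left mult_ac)
  also have "\<dots> = (\<integral>z. (x \<bullet> z) ^ 2 \<partial>D)"
    unfolding integral_quadratic_form[OF assms, symmetric] Y_def quadratic_form_eq_sum
    by (simp add: inner_vec_def power2_eq_square sum_product mult_ac)
  finally show "0 \<le> x \<bullet> (Xmom D *v x)" by simp
qed

lemma traj_eq_matpow: "traj M z t = matpow M t *v z"
  unfolding traj_def by (induction t) (simp_all add: matrix_vector_mul_assoc)

lemma Jcost_eq_inner_lyap_sum:
  assumes "sets D = sets borel" "integrable D (\<lambda>z. norm z ^ 2)"
    and decay: "pow_decay (Acl A B C AK BK CK) c r"
  shows "Jcost D A B C Q R (AK, BK, CK)
    = lyap_sum (Acl A B C AK BK CK) (stage_cost_mat Q R CK) \<bullet> Xmom D"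
proof -
  let ?M = "Acl A B C AK BK CK"
  have "(\<Sum>t. (let xb = traj ?M z t; x = xpart xb; u = CK *v xipart xb in x \<bullet> (Q *v x) + u \<bullet> (R *v u)))
      = z \<bullet> (lyap_sum ?M (stage_cost_mat Q R CK) *v z)" for z
    using sums_unique[OF lyap_quadratic_sums[OF decay, of z "stage_cost_mat Q R CK"]]
    by (simp add: quadratic_form_stage_cost traj_eq_matpow Let_def)
  then have "Jcost D A B C Q R (AK, BK, CK) = (\<integral>z. z \<bullet> (lyap_sum ?M (stage_cost_mat Q R CK) *v z) \<partial>D)"
    unfolding Jcost_def by simp
  also have "\<dots> = lyap_sum ?M (stage_cost_mat Q R CK) \<bullet> Xmom D"
    by (rule integral_quadratic_form[OF assms(1,2)])
  finally show ?thesis .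
qed

lemma PK_eq_lyap_sum:
  assumes "psd_mat Q" "pd_mat R" and decay: "pow_decay (Acl A B C AK BK CK) c r"
  shows "PK A B C Q R AK BK CK = lyap_sum (Acl A B C AK BK CK) (stage_cost_mat Q R CK)"
  unfolding PK_def
proof (rule the_equality)
  show "psd_mat (lyap_sum (Acl A B C AK BK CK) (stage_cost_mat Q R CK)) \<and>
      lyap_sum (Acl A B C AK BK CK) (stage_cost_mat Q R CK)
      = Qbar Q + transpose Fsel ** transpose CK ** R ** CK ** Fsel
        + transpose (Acl A B C AK BK CK) ** lyap_sum (Acl A B C AK BK CK) (stage_cost_mat Q R CK)
          ** Acl A B C AK BK CK"
    using psd_lyap_sum[OF decay psd_stage_cost_mat[OF assms(1,2)]] lyap_sum_fixpoint[OF decay]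
    unfolding stage_cost_mat_def by simp
qed (use lyap_sum_unique[OF decay] in \<open>simp add: stage_cost_mat_def\<close>)

lemma SigmaK_eq_lyap_sum:
  assumes "psd_mat X" and decay: "pow_decay (Acl A B C AK BK CK) c r"
  shows "SigmaK X A B C AK BK CK = lyap_sum (transpose (Acl A B C AK BK CK)) X"
  unfolding SigmaK_def
proof (rule the_equality)
  note decay_T = pow_decay_transpose[OF decay]
  show "psd_mat (lyap_sum (transpose (Acl A B C AK BK CK)) X) \<and>
      lyap_sum (transpose (Acl A B C AK BK CK)) X
      = X + Acl A B C AK BK CK ** lyap_sum (transpose (Acl A B C AK BK CK)) X
          ** transpose (Acl A B C AK BK CK)"
    using psd_lyap_sum[OF decay_T assms(1)] lyap_sum_fixpoint[OF decay_T] by simp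
qed (use lyap_sum_unique[OF pow_decay_transpose[OF decay]] in simp)

section \<open>Differentiability of the cost\<close>

definition residual_deriv :: "real^'n::finite^'n \<Rightarrow> real^'m::finite^'n \<Rightarrow> real^'n^'d::finite \<Rightarrow> real^'m^'m
    \<Rightarrow> real^'n^'n \<Rightarrow> real^'d^'n \<Rightarrow> real^'n^'m \<Rightarrow> real^('n + 'n)^('n + 'n)
    \<Rightarrow> real^'n^'n \<Rightarrow> real^'d^'n \<Rightarrow> real^'n^'m \<Rightarrow> real^('n + 'n)^('n + 'n)" where
  "residual_deriv A B C R AK BK CK P dA dB dC =
     transpose Fsel ** (transpose dC ** R ** CK + transpose CK ** R ** dC) ** Fsel
     + transpose (Acl_lin B C dA dB dC) ** P ** Acl A B C AK BK CK
     + transpose (Acl A B C AK BK CK) ** P ** Acl_lin B C dA dB dC"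

definition residual_quad :: "real^'m::finite^'n::finite \<Rightarrow> real^'n^'d::finite \<Rightarrow> real^'m^'m
    \<Rightarrow> real^('n + 'n)^('n + 'n) \<Rightarrow> real^'n^'n \<Rightarrow> real^'d^'n \<Rightarrow> real^'n^'m
    \<Rightarrow> real^('n + 'n)^('n + 'n)" where
  "residual_quad B C R P dA dB dC =
     transpose (dC ** Fsel) ** R ** (dC ** Fsel)
     + transpose (Acl_lin B C dA dB dC) ** P ** Acl_lin B C dA dB dC"

lemma lyap_residual_expansion:
  assumes "P = stage_cost_mat Q R CK + transpose (Acl A B C AK BK CK) ** P ** Acl A B C AK BK CK"
  shows "stage_cost_mat Q R (CK + dC)
      + transpose (Acl A B C (AK + dA) (BK + dB) (CK + dC)) ** P ** Acl A B C (AK + dA) (BK + dB) (CK + dC) - P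
    = residual_deriv A B C R AK BK CK P dA dB dC + residual_quad B C R P dA dB dC"
proof -
  let ?M = "Acl A B C AK BK CK"
  have "stage_cost_mat Q R (CK + dC)
      + transpose (Acl A B C (AK + dA) (BK + dB) (CK + dC)) ** P ** Acl A B C (AK + dA) (BK + dB) (CK + dC) - P
    = stage_cost_mat Q R (CK + dC)
      + transpose (?M + Acl_lin B C dA dB dC) ** P ** (?M + Acl_lin B C dA dB dC)
      - (stage_cost_mat Q R CK + transpose ?M ** P ** ?M)"
    by (subst assms[symmetric]) (simp add: Acl_add)
  also have "\<dots> = residual_deriv A B C R AK BK CK P dA dB dC + residual_quad B C R P dA dB dC"
    by (simp add: stage_cost_mat_def residual_deriv_def residual_quad_def transpose_add
        matrix_transpose_mul matrix_distribs matrix_mul_assoc algebra_simps)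
  finally show ?thesis .
qed

lemma linear_residual_deriv: "linear (\<lambda>(dA, dB, dC). residual_deriv A B C R AK BK CK P dA dB dC)"
proof (intro linearI)
  show "(\<lambda>(dA, dB, dC). residual_deriv A B C R AK BK CK P dA dB dC) (x + y)
      = (\<lambda>(dA, dB, dC). residual_deriv A B C R AK BK CK P dA dB dC) x
        + (\<lambda>(dA, dB, dC). residual_deriv A B C R AK BK CK P dA dB dC) y" for x y
    by (cases x, cases y) (simp add: residual_deriv_def Acl_lin_add transpose_add matrix_distribs algebra_simps)
  show "(\<lambda>(dA, dB, dC). residual_deriv A B C R AK BK CK P dA dB dC) (k *\<^sub>R x)
      = k *\<^sub>R (\<lambda>(dA, dB, dC). residual_deriv A B C R AK BK CK P dA dB dC) x" for k x
    by (cases x) (simp add: residual_deriv_def Acl_lin_scaleR transpose_scalar matrix_scalar_ac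
        scalar_matrix_assoc[symmetric] scaleR_add_right matrix_add_ldistrib matrix_add_rdistrib)
qed

lemma l1_norm_residual_quad_le:
  "l1_norm (residual_quad B C R P dA dB dC)
    \<le> l1_norm (dC ** Fsel) ^ 2 * l1_norm R + l1_norm (Acl_lin B C dA dB dC) ^ 2 * l1_norm P"
  unfolding residual_quad_def by (rule order_trans[OF l1_norm_add add_mono[OF l1_norm_congruence l1_norm_congruence]])

lemma Jcost_remainder_eq:
  fixes A :: "real^'n::finite^'n" and B :: "real^'m::finite^'n" and C :: "real^'n^'d::finite"
    and Q :: "real^'n^'n" and R :: "real^'m^'m" and D :: "(real^('n + 'n)) measure"
    and AK dA :: "real^'n^'n" and BK dB :: "real^'d^'n" and CK dC :: "real^'n^'m"
  assumes "sets D = sets borel" "integrable D (\<lambda>z. norm z ^ 2)"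
    and decay: "pow_decay (Acl A B C AK BK CK) c r"
    and decay': "pow_decay (Acl A B C (AK + dA) (BK + dB) (CK + dC)) c' r'"
  defines "P \<equiv> lyap_sum (Acl A B C AK BK CK) (stage_cost_mat Q R CK)"
    and "S \<equiv> lyap_sum (transpose (Acl A B C AK BK CK)) (Xmom D)"
    and "S' \<equiv> lyap_sum (transpose (Acl A B C (AK + dA) (BK + dB) (CK + dC))) (Xmom D)"
  shows "Jcost D A B C Q R (AK + dA, BK + dB, CK + dC) - Jcost D A B C Q R (AK, BK, CK)
      - residual_deriv A B C R AK BK CK P dA dB dC \<bullet> S
    = residual_deriv A B C R AK BK CK P dA dB dC \<bullet> (S' - S) + residual_quad B C R P dA dB dC \<bullet> S'"
proof -
  let ?M = "Acl A B C (AK + dA) (BK + dB) (CK + dC)"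
  let ?W = "stage_cost_mat Q R (CK + dC)"
  have "Jcost D A B C Q R (AK + dA, BK + dB, CK + dC) - Jcost D A B C Q R (AK, BK, CK)
      = (lyap_sum ?M ?W - P) \<bullet> Xmom D"
    unfolding Jcost_eq_inner_lyap_sum[OF assms(1,2) decay] Jcost_eq_inner_lyap_sum[OF assms(1,2) decay']
      P_def by (simp add: inner_diff_left)
  also have "\<dots> = lyap_sum ?M (?W + transpose ?M ** P ** ?M - P) \<bullet> Xmom D"
    by (simp add: lyap_sum_telescope[OF decay'])
  also have "\<dots> = (?W + transpose ?M ** P ** ?M - P) \<bullet> lyap_sum (transpose ?M) (Xmom D)"
    by (rule inner_lyap_sum[OF decay'])
  also have "?W + transpose ?M ** P ** ?M - P
      = residual_deriv A B C R AK BK CK P dA dB dC + residual_quad B C R P dA dB dC"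
    unfolding P_def by (rule lyap_residual_expansion[OF lyap_sum_fixpoint[OF decay]])
  finally show ?thesis unfolding S'_def by (simp add: inner_add_left inner_diff_right)
qed

lemma has_derivative_at_of_quadratic_remainder:
  fixes F :: "'a::real_normed_vector \<Rightarrow> real"
  assumes "bounded_linear G" and "0 < \<delta>" and "0 \<le> K"
    and remainder: "\<And>h. norm h < \<delta> \<Longrightarrow> \<bar>F (x + h) - F x - G h\<bar> \<le> K * norm h ^ 2"
  shows "(F has_derivative G) (at x)"
  unfolding has_derivative_at_alt
proof (intro conjI assms(1) allI impI)
  fix e :: real assume "0 < e"
  define d where "d = min \<delta> (e / (K + 1))"
  have "0 < d" unfolding d_def using \<open>0 < e\<close> assms(2,3) by auto
  moreover have "norm (F y - F x - G (y - x)) \<le> e * norm (y - x)" if "norm (y - x) < d" for y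
  proof -
    have small: "norm (y - x) < \<delta>" "norm (y - x) < e / (K + 1)" using that by (auto simp: d_def)
    have "K * norm (y - x) \<le> (K + 1) * (e / (K + 1))"
      using small(2) assms(3) by (intro mult_mono) auto
    then have Kn: "K * norm (y - x) \<le> e" using assms(3) by simp
    have "\<bar>F y - F x - G (y - x)\<bar> \<le> K * norm (y - x) ^ 2"
      using remainder[OF small(1)] by simp
    also have "\<dots> \<le> e * norm (y - x)"
      using Kn by (simp add: power2_eq_square mult.assoc[symmetric] mult_right_mono)
    finally show ?thesis by simp
  qed
  ultimately show "\<exists>d>0. \<forall>y. norm (y - x) < d \<longrightarrow> norm (F y - F x - G (y - x)) \<le> e * norm (y - x)"
    by blast
qed

lemma Jcost_remainder_quadratic:
  fixes A :: "real^'n::finite^'n" and B :: "real^'m::finite^'n" and C :: "real^'n^'d::finite"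
    and Q :: "real^'n^'n" and R :: "real^'m^'m" and D :: "(real^('n + 'n)) measure"
    and AK :: "real^'n^'n" and BK :: "real^'d^'n" and CK :: "real^'n^'m"
  assumes sets: "sets D = sets borel" and integrable: "integrable D (\<lambda>z. norm z ^ 2)"
    and decay: "pow_decay (Acl A B C AK BK CK) c s"
  defines "P \<equiv> lyap_sum (Acl A B C AK BK CK) (stage_cost_mat Q R CK)"
    and "S \<equiv> lyap_sum (transpose (Acl A B C AK BK CK)) (Xmom D)"
  obtains \<delta> K where "0 < \<delta>" "0 \<le> K" "\<And>x. norm x < \<delta> \<Longrightarrow>
    \<bar>Jcost D A B C Q R ((AK, BK, CK) + x) - Jcost D A B C Q R (AK, BK, CK)
      - (\<lambda>(dA, dB, dC). residual_deriv A B C R AK BK CK P dA dB dC) x \<bullet> S\<bar> \<le> K * norm x ^ 2"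
proof -
  let ?M0 = "Acl A B C AK BK CK"
  let ?E1 = "\<lambda>(dA, dB, dC). residual_deriv A B C R AK BK CK P dA dB dC"
  let ?E2 = "\<lambda>(dA, dB, dC). residual_quad B C R P dA dB dC"
  obtain \<rho> K1 K2 where "0 < \<rho>"
    and decay_near: "\<And>M. l1_norm (M - ?M0) \<le> \<rho> \<Longrightarrow> pow_decay M c ((1 + s) / 2)"
    and lipschitz: "\<And>M. l1_norm (M - ?M0) \<le> \<rho> \<Longrightarrow>
      l1_norm (lyap_sum (transpose M) (Xmom D) - S) \<le> K1 * l1_norm (M - ?M0)"
    and bounded: "\<And>M. l1_norm (M - ?M0) \<le> \<rho> \<Longrightarrow> l1_norm (lyap_sum (transpose M) (Xmom D)) \<le> K2"
    using lyap_sum_transpose_local_bounds[OF decay, of "Xmom D", folded S_def] by blast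
  obtain Lm where "0 \<le> Lm" and Lm: "\<And>x. l1_norm ((\<lambda>(dA, dB, dC). Acl_lin B C dA dB dC) x) \<le> Lm * norm x"
    using linear_l1_norm_bound[OF linear_Acl_lin[of B C]] by blast
  obtain Le where "0 \<le> Le" and Le: "\<And>x. l1_norm (?E1 x) \<le> Le * norm x"
    using linear_l1_norm_bound[OF linear_residual_deriv[of A B C R AK BK CK P]] by blast
  obtain Lf where "0 \<le> Lf" and Lf: "\<And>x. l1_norm ((\<lambda>(dA :: real^'n^'n, dB :: real^'d^'n, dC :: real^'n^'m).
      dC ** (Fsel :: real^('n + 'n)^'n)) x) \<le> Lf * norm x"
    using linear_l1_norm_bound[OF linear_mult_Fsel] by blast
  have "l1_norm (lyap_sum (transpose ?M0) (Xmom D)) \<le> K2" using bounded \<open>0 < \<rho>\<close> by simp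
  then have "0 \<le> K2" using l1_norm_nonneg order_trans by blast
  define K where "K = Le * (\<bar>K1\<bar> * Lm) + (Lf\<^sup>2 * l1_norm R + Lm\<^sup>2 * l1_norm P) * K2"
  have "0 \<le> K"
    unfolding K_def using \<open>0 \<le> Lm\<close> \<open>0 \<le> Le\<close> \<open>0 \<le> K2\<close>
    by (intro add_nonneg_nonneg mult_nonneg_nonneg) (auto intro: l1_norm_nonneg)
  have remainder: "\<bar>Jcost D A B C Q R ((AK, BK, CK) + x) - Jcost D A B C Q R (AK, BK, CK) - ?E1 x \<bullet> S\<bar>
      \<le> K * norm x ^ 2" if small: "norm x < \<rho> / (Lm + 1)" for x
  proof -
    obtain dA dB dC where x: "x = (dA, dB, dC)" by (cases x)
    define M where "M = Acl A B C (AK + dA) (BK + dB) (CK + dC)"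
    have "Lm * norm x \<le> (Lm + 1) * norm x" by (simp add: distrib_right)
    also have "\<dots> \<le> (Lm + 1) * (\<rho> / (Lm + 1))"
      using small \<open>0 \<le> Lm\<close> by (intro mult_left_mono) simp_all
    finally have "Lm * norm x \<le> \<rho>" using \<open>0 \<le> Lm\<close> by simp
    have dist: "l1_norm (M - ?M0) \<le> Lm * norm x"
      using Lm[of x] by (simp add: M_def Acl_add x)
    with \<open>Lm * norm x \<le> \<rho>\<close> have near: "l1_norm (M - ?M0) \<le> \<rho>" by simp
    have "Jcost D A B C Q R ((AK, BK, CK) + x) - Jcost D A B C Q R (AK, BK, CK) - ?E1 x \<bullet> S
        = ?E1 x \<bullet> (lyap_sum (transpose M) (Xmom D) - S) + ?E2 x \<bullet> lyap_sum (transpose M) (Xmom D)"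
      using Jcost_remainder_eq[OF sets integrable decay decay_near[OF near, unfolded M_def]]
      unfolding x M_def P_def S_def by simp
    also have "\<bar>\<dots>\<bar> \<le> l1_norm (?E1 x) * l1_norm (lyap_sum (transpose M) (Xmom D) - S)
        + l1_norm (?E2 x) * l1_norm (lyap_sum (transpose M) (Xmom D))"
      by (rule order_trans[OF abs_triangle_ineq add_mono[OF abs_inner_le_l1_norm abs_inner_le_l1_norm]])
    also have "\<dots> \<le> (Le * norm x) * (\<bar>K1\<bar> * (Lm * norm x))
        + ((Lf * norm x)\<^sup>2 * l1_norm R + (Lm * norm x)\<^sup>2 * l1_norm P) * K2"
    proof (rule add_mono)
      have "l1_norm (lyap_sum (transpose M) (Xmom D) - S) \<le> K1 * l1_norm (M - ?M0)"
        by (rule lipschitz[OF near])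
      also have "\<dots> \<le> \<bar>K1\<bar> * (Lm * norm x)"
        using dist by (intro mult_mono) (auto intro: l1_norm_nonneg)
      finally show "l1_norm (?E1 x) * l1_norm (lyap_sum (transpose M) (Xmom D) - S)
          \<le> (Le * norm x) * (\<bar>K1\<bar> * (Lm * norm x))"
        using Le[of x] \<open>0 \<le> Le\<close> by (intro mult_mono) (auto intro: l1_norm_nonneg)
      have "l1_norm (?E2 x) \<le> l1_norm (dC ** Fsel) ^ 2 * l1_norm R + l1_norm (Acl_lin B C dA dB dC) ^ 2 * l1_norm P"
        unfolding x by (simp add: l1_norm_residual_quad_le)
      also have "\<dots> \<le> (Lf * norm x)\<^sup>2 * l1_norm R + (Lm * norm x)\<^sup>2 * l1_norm P"
        using Lf[of x] Lm[of x] unfolding x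
        by (intro add_mono mult_right_mono power_mono l1_norm_nonneg) simp_all
      finally show "l1_norm (?E2 x) * l1_norm (lyap_sum (transpose M) (Xmom D))
          \<le> ((Lf * norm x)\<^sup>2 * l1_norm R + (Lm * norm x)\<^sup>2 * l1_norm P) * K2"
        using bounded[OF near] by (intro mult_mono) (auto intro!: l1_norm_nonneg add_nonneg_nonneg mult_nonneg_nonneg)
    qed
    also have "\<dots> = K * norm x ^ 2" unfolding K_def by (simp add: power2_eq_square algebra_simps)
    finally show ?thesis .
  qed
  moreover have "0 < \<rho> / (Lm + 1)" using \<open>0 < \<rho>\<close> \<open>0 \<le> Lm\<close> by simp
  ultimately show thesis using that \<open>0 \<le> K\<close> by blast
qed

lemma Jcost_has_derivative:
  fixes A :: "real^'n::finite^'n" and B :: "real^'m::finite^'n" and C :: "real^'n^'d::finite"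
    and Q :: "real^'n^'n" and R :: "real^'m^'m" and D :: "(real^('n + 'n)) measure"
    and AK :: "real^'n^'n" and BK :: "real^'d^'n" and CK :: "real^'n^'m"
  assumes sets: "sets D = sets borel" and integrable: "integrable D (\<lambda>z. norm z ^ 2)"
    and decay: "pow_decay (Acl A B C AK BK CK) c s"
  defines "P \<equiv> lyap_sum (Acl A B C AK BK CK) (stage_cost_mat Q R CK)"
    and "S \<equiv> lyap_sum (transpose (Acl A B C AK BK CK)) (Xmom D)"
  shows "(Jcost D A B C Q R has_derivative
      (\<lambda>(dA, dB, dC). residual_deriv A B C R AK BK CK P dA dB dC \<bullet> S)) (at (AK, BK, CK))"
proof -
  let ?E1 = "\<lambda>(dA, dB, dC). residual_deriv A B C R AK BK CK P dA dB dC"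
  obtain \<delta> K where "0 < \<delta>" "0 \<le> K" and remainder: "\<And>x. norm x < \<delta> \<Longrightarrow>
      \<bar>Jcost D A B C Q R ((AK, BK, CK) + x) - Jcost D A B C Q R (AK, BK, CK) - ?E1 x \<bullet> S\<bar> \<le> K * norm x ^ 2"
    using Jcost_remainder_quadratic[OF sets integrable decay, of Q R, folded P_def S_def] by blast
  have "bounded_linear (\<lambda>x. ?E1 x \<bullet> S)"
    using linear_compose[OF linear_residual_deriv bounded_linear.linear[OF bounded_linear_inner_left[of S]]]
    by (simp add: o_def linear_conv_bounded_linear)
  moreover have "(\<lambda>x. ?E1 x \<bullet> S) = (\<lambda>(dA, dB, dC). residual_deriv A B C R AK BK CK P dA dB dC \<bullet> S)"
    by (auto simp: fun_eq_iff)
  ultimately show ?thesis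
    using has_derivative_at_of_quadratic_remainder[OF _ \<open>0 < \<delta>\<close> \<open>0 \<le> K\<close> remainder] by simp
qed

section \<open>The gradient in block form\<close>

definition grad_AK :: "real^'n::finite^'n \<Rightarrow> real^'m::finite^'n \<Rightarrow> real^'n^'d::finite
    \<Rightarrow> real^'n^'n \<Rightarrow> real^'d^'n \<Rightarrow> real^'n^'m
    \<Rightarrow> real^('n + 'n)^('n + 'n) \<Rightarrow> real^('n + 'n)^('n + 'n) \<Rightarrow> real^'n^'n" where
  "grad_AK A B C AK BK CK P S =
     2 *\<^sub>R ((transpose (blk12 P) ** B ** CK + blk22 P ** AK) ** blk22 S)
     + 2 *\<^sub>R ((transpose (blk12 P) ** A + blk22 P ** BK ** C) ** blk12 S)"

definition grad_BK :: "real^'n::finite^'n \<Rightarrow> real^'m::finite^'n \<Rightarrow> real^'n^'d::finite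
    \<Rightarrow> real^'n^'n \<Rightarrow> real^'d^'n \<Rightarrow> real^'n^'m
    \<Rightarrow> real^('n + 'n)^('n + 'n) \<Rightarrow> real^('n + 'n)^('n + 'n) \<Rightarrow> real^'d^'n" where
  "grad_BK A B C AK BK CK P S =
     2 *\<^sub>R ((transpose (blk12 P) ** A + blk22 P ** BK ** C) ** blk11 S ** transpose C)
     + 2 *\<^sub>R ((transpose (blk12 P) ** B ** CK + blk22 P ** AK) ** transpose (blk12 S) ** transpose C)"

definition grad_CK :: "real^'n::finite^'n \<Rightarrow> real^'m::finite^'n \<Rightarrow> real^'n^'d::finite \<Rightarrow> real^'m^'m
    \<Rightarrow> real^'n^'n \<Rightarrow> real^'d^'n \<Rightarrow> real^'n^'m
    \<Rightarrow> real^('n + 'n)^('n + 'n) \<Rightarrow> real^('n + 'n)^('n + 'n) \<Rightarrow> real^'n^'m" where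
  "grad_CK A B C R AK BK CK P S =
     2 *\<^sub>R (transpose B ** (blk11 P ** A + blk12 P ** BK ** C) ** blk12 S)
     + 2 *\<^sub>R (((R + transpose B ** blk11 P ** B) ** CK + transpose B ** blk12 P ** AK) ** blk22 S)"

lemma gradients_eq_blocks:
  fixes A :: "real^'n::finite^'n" and B :: "real^'m::finite^'n" and C :: "real^'n^'d::finite"
    and AK :: "real^'n^'n" and BK :: "real^'d^'n" and CK :: "real^'n^'m"
    and P S :: "real^('n + 'n)^('n + 'n)"
  assumes P: "transpose P = P" and S: "transpose S = S"
  defines "Y \<equiv> transpose (Bbar B) ** P ** Acl A B C AK BK CK ** S ** transpose (Cbar C)"
  shows "grad_AK A B C AK BK CK P S = 2 *\<^sub>R blk22 Y"
    and "grad_BK A B C AK BK CK P S = 2 *\<^sub>R blk21 Y"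
    and "grad_CK A B C R AK BK CK P S = 2 *\<^sub>R (blk12 Y + R ** CK ** blk22 S)"
proof -
  have Y: "Y = transpose (blk B 0 0 (Finite_Cartesian_Product.mat 1))
      ** blk (blk11 P) (blk12 P) (transpose (blk12 P)) (blk22 P)
      ** blk A (B ** CK) (BK ** C) AK
      ** blk (blk11 S) (blk12 S) (transpose (blk12 S)) (blk22 S)
      ** transpose (blk C 0 0 (Finite_Cartesian_Product.mat 1))"
    unfolding Y_def Acl_blk Bbar_def Cbar_def symmetric_blk_blocks[OF P] symmetric_blk_blocks[OF S] ..
  show "grad_AK A B C AK BK CK P S = 2 *\<^sub>R blk22 Y"
    unfolding grad_AK_def Y
    by (simp add: transpose_blk blk_mult matrix_distribs matrix_mul_assoc transpose_zero add_ac
        flip: scaleR_add_right)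
  show "grad_BK A B C AK BK CK P S = 2 *\<^sub>R blk21 Y"
    unfolding grad_BK_def Y
    by (simp add: transpose_blk blk_mult matrix_distribs matrix_mul_assoc transpose_zero add_ac
        flip: scaleR_add_right)
  show "grad_CK A B C R AK BK CK P S = 2 *\<^sub>R (blk12 Y + R ** CK ** blk22 S)"
    unfolding grad_CK_def Y
    by (simp add: transpose_blk blk_mult matrix_distribs matrix_mul_assoc transpose_zero add_ac
        flip: scaleR_add_right)
qed

lemma inner_residual_deriv:
  fixes A :: "real^'n::finite^'n" and B :: "real^'m::finite^'n" and C :: "real^'n^'d::finite"
    and R :: "real^'m^'m" and AK dA :: "real^'n^'n" and BK dB :: "real^'d^'n" and CK dC :: "real^'n^'m"
    and P S :: "real^('n + 'n)^('n + 'n)"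
  assumes P: "transpose P = P" and S: "transpose S = S" and R: "transpose R = R"
  shows "residual_deriv A B C R AK BK CK P dA dB dC \<bullet> S
    = grad_AK A B C AK BK CK P S \<bullet> dA + grad_BK A B C AK BK CK P S \<bullet> dB
      + grad_CK A B C R AK BK CK P S \<bullet> dC"
proof -
  let ?M = "Acl A B C AK BK CK"
  let ?dM = "Acl_lin B C dA dB dC"
  define Y where "Y = transpose (Bbar B) ** P ** ?M ** S ** transpose (Cbar C)"
  have cost_term: "(transpose Fsel ** (transpose dC ** R ** CK + transpose CK ** R ** dC) ** Fsel) \<bullet> S
      = 2 * (dC \<bullet> (R ** CK ** blk22 S))"
  proof -
    let ?Z = "transpose dC ** R ** CK + transpose CK ** R ** dC"
    have "(transpose Fsel ** ?Z ** Fsel) \<bullet> S = (transpose Fsel ** ?Z) \<bullet> (S ** transpose Fsel)"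
      by (rule inner_matrix_mult_right)
    also have "\<dots> = ?Z \<bullet> (Fsel ** (S ** transpose Fsel))"
      by (simp add: inner_matrix_mult_left)
    also have "\<dots> = (transpose dC ** R ** CK) \<bullet> blk22 S + (transpose CK ** R ** dC) \<bullet> blk22 S"
      by (simp add: matrix_mul_assoc Fsel_sandwich inner_add_left)
    also have "(transpose dC ** R ** CK) \<bullet> blk22 S = (transpose CK ** R ** dC) \<bullet> blk22 S"
      using inner_transpose_symmetric[OF blk22_symmetric[OF S], of "transpose CK ** R ** dC"]
      by (simp add: matrix_transpose_mul matrix_mul_assoc R)
    also have "(transpose CK ** R ** dC) \<bullet> blk22 S = dC \<bullet> (R ** CK ** blk22 S)"
      by (simp add: inner_matrix_mult_left matrix_transpose_mul R matrix_mul_assoc)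
    finally show ?thesis by simp
  qed
  have loop_term: "(transpose ?M ** P ** ?dM) \<bullet> S = dA \<bullet> blk22 Y + dB \<bullet> blk21 Y + dC \<bullet> blk12 Y"
  proof -
    have "(transpose ?M ** P ** ?dM) \<bullet> S = Kmat dA dB dC \<bullet> Y"
      using inner_matrix_mult_right[of "transpose ?M ** P ** Bbar B ** Kmat dA dB dC" "Cbar C" S]
        inner_matrix_mult_left[of "transpose ?M ** P ** Bbar B" "Kmat dA dB dC"]
      unfolding Acl_lin_def Y_def by (simp add: matrix_mul_assoc matrix_transpose_mul P)
    also have "\<dots> = dA \<bullet> blk22 Y + dB \<bullet> blk21 Y + dC \<bullet> blk12 Y"
      by (subst blk_blocks[of Y, symmetric]) (simp add: Kmat_def inner_blk)
    finally show ?thesis .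
  qed
  have "(transpose ?dM ** P ** ?M) \<bullet> S = (transpose ?M ** P ** ?dM) \<bullet> S"
    using inner_transpose_symmetric[OF S, of "transpose ?M ** P ** ?dM"]
    by (simp add: matrix_transpose_mul matrix_mul_assoc P)
  then have "residual_deriv A B C R AK BK CK P dA dB dC \<bullet> S
      = 2 * (dC \<bullet> (R ** CK ** blk22 S)) + 2 * (dA \<bullet> blk22 Y + dB \<bullet> blk21 Y + dC \<bullet> blk12 Y)"
    unfolding residual_deriv_def inner_add_left cost_term loop_term by simp
  then show ?thesis
    unfolding gradients_eq_blocks[OF P S, where A = A and B = B and C = C and AK = AK and BK = BK and CK = CK,
        folded Y_def]
    by (simp add: inner_add_left inner_add_right inner_commute algebra_simps)
qed

theorem lemma4:
  fixes A :: "real^'n^'n" and B :: "real^'m^'n" and C :: "real^'n^'d"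
    and Q :: "real^'n^'n" and R :: "real^'m^'m"
    and D :: "(real^('n + 'n)) measure"
    and AK :: "real^'n^'n" and BK :: "real^'d^'n" and CK :: "real^'n^'m"
  assumes "psd_mat Q" and "pd_mat R"
    and "prob_space D" and "sets D = sets borel"
    and "integrable D (\<lambda>z. norm z ^ 2)"
    and "(AK, BK, CK) \<in> stab_set A B C"
  shows "let P = PK A B C Q R AK BK CK; S = SigmaK (Xmom D) A B C AK BK CK;
             P11 = blk11 P; P12 = blk12 P; P22 = blk22 P;
             S11 = blk11 S; S12 = blk12 S; S22 = blk22 S;
             GC = 2 *\<^sub>R (transpose B ** (P11 ** A + P12 ** BK ** C) ** S12)
                + 2 *\<^sub>R (((R + transpose B ** P11 ** B) ** CK + transpose B ** P12 ** AK) ** S22);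
             GB = 2 *\<^sub>R ((transpose P12 ** A + P22 ** BK ** C) ** S11 ** transpose C)
                + 2 *\<^sub>R ((transpose P12 ** B ** CK + P22 ** AK) ** transpose S12 ** transpose C);
             GA = 2 *\<^sub>R ((transpose P12 ** B ** CK + P22 ** AK) ** S22)
                + 2 *\<^sub>R ((transpose P12 ** A + P22 ** BK ** C) ** S12)
         in (Jcost D A B C Q R has_derivative
               (\<lambda>(dA, dB, dC). GA \<bullet> dA + GB \<bullet> dB + GC \<bullet> dC)) (at (AK, BK, CK))"
proof -
  let ?M = "Acl A B C AK BK CK"
  obtain c s where decay: "pow_decay ?M c s"
    using assms(6) pow_decay_of_spectral_radius_lt_1 unfolding stab_set_def by blast
  define P where "P = lyap_sum ?M (stage_cost_mat Q R CK)"
  define S where "S = lyap_sum (transpose ?M) (Xmom D)"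
  have "PK A B C Q R AK BK CK = P"
    unfolding P_def by (rule PK_eq_lyap_sum[OF assms(1,2) decay])
  moreover have "SigmaK (Xmom D) A B C AK BK CK = S"
    unfolding S_def by (rule SigmaK_eq_lyap_sum[OF psd_Xmom[OF assms(4,5)] decay])
  moreover have "transpose P = P" "transpose S = S" "transpose R = R"
    using psd_lyap_sum[OF decay psd_stage_cost_mat[OF assms(1,2)]]
      psd_lyap_sum[OF pow_decay_transpose[OF decay] psd_Xmom[OF assms(4,5)]] assms(2)
    unfolding P_def S_def psd_mat_def pd_mat_def by blast+
  ultimately show ?thesis
    using Jcost_has_derivative[OF assms(4,5) decay, of Q R, folded P_def S_def]
    by (simp add: Let_def inner_residual_deriv grad_AK_def grad_BK_def grad_CK_def case_prod_beta')
qed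

end
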